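(* Let $(\mathcal{A},\tau)$ be a tracial $W^*$-probability space, $X$ a topological space, and $u_1,u_2:X\to\mathcal{A}$ functions continuous with respect to the operator norm on $\mathcal{A}$, such that for every $x\in X$: $u_1(x)$ and $u_2(x)$ are $*$-free, $\tau(u_1(x))=\tau(u_2(x))=0$, and $1_{\mathcal{A}}-u_1(x)u_2(x)$ is invertible in $\mathcal{A}$. Then the set \[Y=\{x\in X:\|u_1(x)\|_2\|u_2(x)\|_2<1\}\] is both open and closed in $X$. In particular, if $X$ is connected, then either $Y=X$ or $Y=\varnothing$.
   Context: A tracial $W^*$-probability space is a von Neumann algebra $\mathcal{A}$ with a faithful normal trace $\tau$ satisfying $\tau(1_{\mathcal{A}})=1$. $\|a\|_2=\tau(a^*a)^{1/2}$. Elements $a,b$ are $*$-free if the unital $*$-algebras they generate are freely independent with respect to $\tau$. *)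

theory Defs
  imports "HOL-Analysis.Analysis"
begin

text \<open>Concrete model: every Hilbert space is unitarily equivalent to some l2(I);
  we take H = l2 over an arbitrary index type 'i. Vectors are functions 'i => complex,
  operators are maps on such functions which are linear and bounded on l2 and
  send everything outside l2 to 0 (canonical representatives).\<close>

type_synonym 'i vec = "'i \<Rightarrow> complex"
type_synonym 'i op = "'i vec \<Rightarrow> 'i vec"

definition l2 :: "'i vec set" where
  "l2 = {f. (\<lambda>i. (cmod (f i))^2) summable_on UNIV}"

definition l2_inner :: "'i vec \<Rightarrow> 'i vec \<Rightarrow> complex" where
  "l2_inner f g = infsum (\<lambda>i. cnj (f i) * g i) UNIV"

definition l2_norm :: "'i vec \<Rightarrow> real" where
  "l2_norm f = sqrt (infsum (\<lambda>i. (cmod (f i))^2) UNIV)"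

definition is_bdd_op :: "'i op \<Rightarrow> bool" where
  "is_bdd_op T \<longleftrightarrow>
     (\<forall>x\<in>l2. T x \<in> l2) \<and>
     (\<forall>x\<in>l2. \<forall>y\<in>l2. \<forall>a b. T (\<lambda>i. a * x i + b * y i) = (\<lambda>i. a * T x i + b * T y i)) \<and>
     (\<exists>K. \<forall>x\<in>l2. l2_norm (T x) \<le> K * l2_norm x) \<and>
     (\<forall>x. x \<notin> l2 \<longrightarrow> T x = (\<lambda>i. 0))"

definition op_norm :: "'i op \<Rightarrow> real" where
  "op_norm T = Sup {l2_norm (T x) | x. x \<in> l2 \<and> l2_norm x \<le> 1}"

definition op_id :: "'i op" where
  "op_id = (\<lambda>x. if x \<in> l2 then x else (\<lambda>i. 0))"

definition op_zero :: "'i op" where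
  "op_zero = (\<lambda>x i. 0)"

definition op_add :: "'i op \<Rightarrow> 'i op \<Rightarrow> 'i op" where
  "op_add S T = (\<lambda>x i. S x i + T x i)"

definition op_sub :: "'i op \<Rightarrow> 'i op \<Rightarrow> 'i op" where
  "op_sub S T = (\<lambda>x i. S x i - T x i)"

definition op_scale :: "complex \<Rightarrow> 'i op \<Rightarrow> 'i op" where
  "op_scale c T = (\<lambda>x i. c * T x i)"

text \<open>Algebra product is composition (S \<circ> T).\<close>

definition is_adjoint :: "'i op \<Rightarrow> 'i op \<Rightarrow> bool" where
  "is_adjoint T S \<longleftrightarrow> is_bdd_op S \<and>
     (\<forall>x\<in>l2. \<forall>y\<in>l2. l2_inner (T x) y = l2_inner x (S y))"

definition adj :: "'i op \<Rightarrow> 'i op" where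
  "adj T = (THE S. is_adjoint T S)"

definition commutant :: "'i op set \<Rightarrow> 'i op set" where
  "commutant S = {T. is_bdd_op T \<and> (\<forall>s\<in>S. T \<circ> s = s \<circ> T)}"

definition von_neumann_algebra :: "'i op set \<Rightarrow> bool" where
  "von_neumann_algebra A \<longleftrightarrow>
     (\<forall>a\<in>A. is_bdd_op a) \<and> (\<forall>a\<in>A. adj a \<in> A) \<and> commutant (commutant A) = A"

definition nonneg_complex :: "complex \<Rightarrow> bool" where
  "nonneg_complex z \<longleftrightarrow> Im z = 0 \<and> Re z \<ge> 0"

definition op_pos :: "'i op \<Rightarrow> bool" where
  "op_pos T \<longleftrightarrow> (\<forall>x\<in>l2. nonneg_complex (l2_inner x (T x)))"

definition op_le :: "'i op \<Rightarrow> 'i op \<Rightarrow> bool" where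
  "op_le S T \<longleftrightarrow> op_pos (op_sub T S)"

definition self_adjoint :: "'i op \<Rightarrow> bool" where
  "self_adjoint T \<longleftrightarrow> is_bdd_op T \<and> adj T = T"

definition normal_functional :: "'i op set \<Rightarrow> ('i op \<Rightarrow> complex) \<Rightarrow> bool" where
  "normal_functional A \<tau> \<longleftrightarrow>
     (\<forall>D s. D \<subseteq> A \<and> D \<noteq> {} \<and> (\<forall>d\<in>D. self_adjoint d \<and> op_pos d) \<and>
        (\<forall>d1\<in>D. \<forall>d2\<in>D. \<exists>d3\<in>D. op_le d1 d3 \<and> op_le d2 d3) \<and>
        s \<in> A \<and> self_adjoint s \<and> (\<forall>d\<in>D. op_le d s) \<and>
        (\<forall>t. self_adjoint t \<and> (\<forall>d\<in>D. op_le d t) \<longrightarrow> op_le s t)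
      \<longrightarrow> Re (\<tau> s) = Sup ((\<lambda>d. Re (\<tau> d)) ` D))"

definition tracial_W_prob_space :: "'i op set \<Rightarrow> ('i op \<Rightarrow> complex) \<Rightarrow> bool" where
  "tracial_W_prob_space A \<tau> \<longleftrightarrow>
     von_neumann_algebra A \<and>
     (\<forall>a\<in>A. \<forall>b\<in>A. \<forall>c d. \<tau> (op_add (op_scale c a) (op_scale d b)) = c * \<tau> a + d * \<tau> b) \<and>
     (\<forall>a\<in>A. nonneg_complex (\<tau> (adj a \<circ> a))) \<and>
     (\<forall>a\<in>A. \<tau> (adj a \<circ> a) = 0 \<longrightarrow> a = op_zero) \<and>
     (\<forall>a\<in>A. \<forall>b\<in>A. \<tau> (a \<circ> b) = \<tau> (b \<circ> a)) \<and>
     \<tau> op_id = 1 \<and>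
     normal_functional A \<tau>"

definition norm2 :: "('i op \<Rightarrow> complex) \<Rightarrow> 'i op \<Rightarrow> real" where
  "norm2 \<tau> a = sqrt (Re (\<tau> (adj a \<circ> a)))"

definition invertible_in :: "'i op set \<Rightarrow> 'i op \<Rightarrow> bool" where
  "invertible_in A a \<longleftrightarrow> (\<exists>b\<in>A. a \<circ> b = op_id \<and> b \<circ> a = op_id)"

inductive_set star_alg :: "'i op \<Rightarrow> 'i op set" for a :: "'i op" where
  sa_one: "op_id \<in> star_alg a"
| sa_gen: "a \<in> star_alg a"
| sa_adj: "adj a \<in> star_alg a"
| sa_add: "x \<in> star_alg a \<Longrightarrow> y \<in> star_alg a \<Longrightarrow> op_add x y \<in> star_alg a"
| sa_mult: "x \<in> star_alg a \<Longrightarrow> y \<in> star_alg a \<Longrightarrow> x \<circ> y \<in> star_alg a"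
| sa_scale: "x \<in> star_alg a \<Longrightarrow> op_scale c x \<in> star_alg a"

definition op_prod :: "'i op list \<Rightarrow> 'i op" where
  "op_prod xs = foldr (\<circ>) xs op_id"

definition star_free :: "('i op \<Rightarrow> complex) \<Rightarrow> 'i op \<Rightarrow> 'i op \<Rightarrow> bool" where
  "star_free \<tau> a b \<longleftrightarrow>
     (\<forall>xs ks. xs \<noteq> [] \<and> length ks = length xs \<and>
        (\<forall>j<length xs. xs ! j \<in> (if ks ! j then star_alg a else star_alg b) \<and> \<tau> (xs ! j) = 0) \<and>
        (\<forall>j. Suc j < length xs \<longrightarrow> ks ! j \<noteq> ks ! Suc j)
      \<longrightarrow> \<tau> (op_prod xs) = 0)"

definition op_norm_continuous :: "('x::topological_space \<Rightarrow> 'i op) \<Rightarrow> bool" where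
  "op_norm_continuous u \<longleftrightarrow>
     (\<forall>x0. \<forall>e>0. \<forall>\<^sub>F x in nhds x0. op_norm (op_sub (u x) (u x0)) < e)"

end

theory Submission
  imports Defs
begin

text \<open>Fix \<open>x\<close> and write \<open>a = u\<^sub>1 x\<close>, \<open>b = u\<^sub>2 x\<close>. For centred \<open>*\<close>-free \<open>a\<close>, \<open>b\<close>, freeness gives
  \<open>\<tau>(((ab)\<^sup>m)\<^sup>* (ab)\<^sup>n) = \<delta>\<^sub>m\<^sub>n (\<parallel>a\<parallel>\<^sub>2\<^sup>2 \<parallel>b\<parallel>\<^sub>2\<^sup>2)\<^sup>n\<close>. So if \<open>\<parallel>a\<parallel>\<^sub>2 \<parallel>b\<parallel>\<^sub>2 = 1\<close>, the powers of \<open>ab\<close>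
  are orthonormal in \<open>L\<^sup>2(\<tau>)\<close>, and then \<open>1 - ab\<close> cannot be invertible: the geometric sums
  \<open>S\<^sub>N = \<Sum>\<^sub>k\<^sub><\<^sub>N (ab)\<^sup>k\<close> have \<open>\<parallel>S\<^sub>N\<parallel>\<^sub>2\<^sup>2 = N\<close> while \<open>\<parallel>(1 - ab) S\<^sub>N\<parallel>\<^sub>2\<^sup>2 = \<parallel>1 - (ab)\<^sup>N\<parallel>\<^sub>2\<^sup>2 = 2\<close>.
  Hence \<open>x \<mapsto> \<parallel>u\<^sub>1 x\<parallel>\<^sub>2 \<parallel>u\<^sub>2 x\<parallel>\<^sub>2\<close> never takes the value 1; it is continuous because
  \<open>\<parallel>\<cdot>\<parallel>\<^sub>2 \<le> \<parallel>\<cdot>\<parallel>\<close>, so \<open>Y\<close>, which equals the closed set where it is \<open>\<le> 1\<close>, is clopen.\<close>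

section \<open>The sequence space l2\<close>

lemma l2_zero [simp]: "(\<lambda>i. 0) \<in> l2"
  by (simp add: l2_def)

lemma l2_lincomb:
  assumes "x \<in> l2" "y \<in> l2"
  shows "(\<lambda>i. a * x i + b * y i) \<in> l2"
proof -
  have sx: "(\<lambda>i. (cmod (x i))^2) summable_on UNIV" and sy: "(\<lambda>i. (cmod (y i))^2) summable_on UNIV"
    using assms by (auto simp: l2_def)
  have s: "(\<lambda>i. 2 * (cmod a)^2 * (cmod (x i))^2 + 2 * (cmod b)^2 * (cmod (y i))^2) summable_on UNIV"
    by (intro summable_on_add summable_on_cmult_right sx sy)
  have le: "(cmod (a * x i + b * y i))^2 \<le> 2 * (cmod a)^2 * (cmod (x i))^2 + 2 * (cmod b)^2 * (cmod (y i))^2"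
    for i
  proof -
    have "cmod (a * x i + b * y i) \<le> cmod a * cmod (x i) + cmod b * cmod (y i)"
      by (metis norm_mult norm_triangle_ineq)
    hence "(cmod (a * x i + b * y i))^2 \<le> (cmod a * cmod (x i) + cmod b * cmod (y i))^2"
      by (simp add: power_mono)
    also have "\<dots> \<le> 2 * (cmod a * cmod (x i))^2 + 2 * (cmod b * cmod (y i))^2"
      using sum_squares_bound[of "cmod a * cmod (x i)" "cmod b * cmod (y i)"]
      by (simp add: power2_eq_square algebra_simps)
    finally show ?thesis by (simp add: power_mult_distrib)
  qed
  show ?thesis unfolding l2_def mem_Collect_eq
    by (rule summable_on_comparison_test[OF s]) (auto intro: le)
qed

lemma l2_add: "x \<in> l2 \<Longrightarrow> y \<in> l2 \<Longrightarrow> (\<lambda>i. x i + y i) \<in> l2"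
  using l2_lincomb[of x y 1 1] by simp

lemma l2_scale: "x \<in> l2 \<Longrightarrow> (\<lambda>i. a * x i) \<in> l2"
  using l2_lincomb[of x x a 0] by simp

lemma l2_diff: "x \<in> l2 \<Longrightarrow> y \<in> l2 \<Longrightarrow> (\<lambda>i. x i - y i) \<in> l2"
  using l2_lincomb[of x y 1 "-1"] by simp

lemma finite_support_in_l2:
  assumes "finite F" "\<And>j. j \<notin> F \<Longrightarrow> z j = 0"
  shows "z \<in> l2"
  unfolding l2_def mem_Collect_eq
  by (rule finite_nonzero_values_imp_summable_on) (rule finite_subset[OF _ assms(1)], use assms(2) in auto)

lemma l2_inner_abs_summable:
  assumes "x \<in> l2" "y \<in> l2"
  shows "(\<lambda>i. norm (cnj (x i) * y i)) summable_on UNIV"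
proof -
  have s: "(\<lambda>i. (cmod (x i))^2 + (cmod (y i))^2) summable_on UNIV"
    using assms by (intro summable_on_add) (auto simp: l2_def)
  have "norm (cnj (x i) * y i) \<le> (cmod (x i))^2 + (cmod (y i))^2" for i
    unfolding norm_mult complex_mod_cnj
    using sum_squares_bound[of "cmod (x i)" "cmod (y i)"] mult_nonneg_nonneg[OF norm_ge_zero norm_ge_zero, of "x i" "y i"]
    by linarith
  then show ?thesis
    by (intro summable_on_comparison_test[OF s]) auto
qed

lemma l2_inner_summable: "x \<in> l2 \<Longrightarrow> y \<in> l2 \<Longrightarrow> (\<lambda>i. cnj (x i) * y i) summable_on UNIV"
  by (rule abs_summable_summable[OF l2_inner_abs_summable])

lemma l2_inner_lincomb_right:
  assumes "x \<in> l2" "y \<in> l2" "z \<in> l2"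
  shows "l2_inner x (\<lambda>i. a * y i + b * z i) = a * l2_inner x y + b * l2_inner x z"
proof -
  have "l2_inner x (\<lambda>i. a * y i + b * z i)
      = infsum (\<lambda>i. a * (cnj (x i) * y i) + b * (cnj (x i) * z i)) UNIV"
    unfolding l2_inner_def by (rule infsum_cong) (simp add: algebra_simps)
  also have "\<dots> = infsum (\<lambda>i. a * (cnj (x i) * y i)) UNIV + infsum (\<lambda>i. b * (cnj (x i) * z i)) UNIV"
    by (rule infsum_add) (auto intro!: summable_on_cmult_right l2_inner_summable assms)
  also have "\<dots> = a * l2_inner x y + b * l2_inner x z"
    unfolding l2_inner_def by (simp add: infsum_cmult_right')
  finally show ?thesis .
qed

lemma l2_inner_commute: "l2_inner y x = cnj (l2_inner x y)"
  unfolding l2_inner_def infsum_cnj[symmetric] by (simp add: mult.commute)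

lemma l2_inner_lincomb_left:
  assumes "x \<in> l2" "y \<in> l2" "z \<in> l2"
  shows "l2_inner (\<lambda>i. a * y i + b * z i) x = cnj a * l2_inner y x + cnj b * l2_inner z x"
  using l2_inner_lincomb_right[OF assms, of a b] by (simp add: l2_inner_commute[of _ x])

lemma l2_inner_add_left:
  "x \<in> l2 \<Longrightarrow> y \<in> l2 \<Longrightarrow> z \<in> l2 \<Longrightarrow> l2_inner (\<lambda>i. x i + y i) z = l2_inner x z + l2_inner y z"
  using l2_inner_lincomb_left[of z x y 1 1] by simp

lemma l2_inner_add_right:
  "x \<in> l2 \<Longrightarrow> y \<in> l2 \<Longrightarrow> z \<in> l2 \<Longrightarrow> l2_inner z (\<lambda>i. x i + y i) = l2_inner z x + l2_inner z y"
  using l2_inner_lincomb_right[of z x y 1 1] by simp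

lemma l2_inner_scale_left: "x \<in> l2 \<Longrightarrow> z \<in> l2 \<Longrightarrow> l2_inner (\<lambda>i. c * x i) z = cnj c * l2_inner x z"
  using l2_inner_lincomb_left[of z x x c 0] by simp

lemma l2_inner_scale_right: "x \<in> l2 \<Longrightarrow> z \<in> l2 \<Longrightarrow> l2_inner z (\<lambda>i. c * x i) = c * l2_inner z x"
  using l2_inner_lincomb_right[of z x x c 0] by simp

lemma l2_inner_zero_left [simp]: "l2_inner (\<lambda>i. 0) x = 0"
  and l2_inner_zero_right [simp]: "l2_inner x (\<lambda>i. 0) = 0"
  by (simp_all add: l2_inner_def)

lemma l2_inner_finite_support:
  assumes "finite F" "\<And>j. j \<notin> F \<Longrightarrow> z j = 0"
  shows "l2_inner z y = (\<Sum>j\<in>F. cnj (z j) * y j)"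
proof -
  have "l2_inner z y = infsum (\<lambda>j. cnj (z j) * y j) F"
    unfolding l2_inner_def by (rule infsum_cong_neutral) (use assms(2) in auto)
  thus ?thesis using assms(1) by simp
qed

lemma l2_norm_nonneg: "l2_norm x \<ge> 0"
  by (simp add: l2_norm_def infsum_nonneg)

lemma l2_norm_power2: "(l2_norm x)^2 = infsum (\<lambda>i. (cmod (x i))^2) UNIV"
  by (simp add: l2_norm_def infsum_nonneg)

lemma cnj_mult_self: "cnj z * z = complex_of_real ((cmod z)^2)"
  by (metis complex_norm_square mult.commute)

lemma l2_inner_self: "x \<in> l2 \<Longrightarrow> l2_inner x x = of_real ((l2_norm x)^2)"
proof -
  assume "x \<in> l2"
  then have "((\<lambda>i. complex_of_real ((cmod (x i))^2)) has_sum of_real ((l2_norm x)^2)) UNIV"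
    unfolding l2_norm_power2 by (intro has_sum_of_real) (simp add: l2_def)
  then show ?thesis
    by (simp add: l2_inner_def infsumI cnj_mult_self)
qed

lemma l2_norm_eq_zeroD: assumes "x \<in> l2" "l2_norm x = 0" shows "x = (\<lambda>i. 0)"
proof
  fix i
  have "infsum (\<lambda>i. (cmod (x i))^2) UNIV \<le> 0"
    using l2_norm_power2[of x] assms(2) by simp
  hence "(cmod (x i))^2 = 0"
    by (rule nonneg_infsum_le_0D) (use assms(1) in \<open>auto simp: l2_def\<close>)
  thus "x i = 0" by simp
qed

lemma l2_norm_scale: "l2_norm (\<lambda>i. c * x i) = cmod c * l2_norm x"
proof -
  have "infsum (\<lambda>i. (cmod (c * x i))^2) UNIV = (cmod c)^2 * infsum (\<lambda>i. (cmod (x i))^2) UNIV"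
    by (simp add: norm_mult power_mult_distrib infsum_cmult_right')
  thus ?thesis unfolding l2_norm_def by (simp add: real_sqrt_mult)
qed

lemma l2_norm_power2_finite_support:
  assumes "finite F" "\<And>j. j \<notin> F \<Longrightarrow> z j = 0"
  shows "(l2_norm z)^2 = (\<Sum>j\<in>F. (cmod (z j))^2)"
proof -
  have "infsum (\<lambda>j. (cmod (z j))^2) UNIV = infsum (\<lambda>j. (cmod (z j))^2) F"
    by (rule infsum_cong_neutral) (use assms(2) in auto)
  thus ?thesis using assms(1) by (simp add: l2_norm_power2)
qed

lemma weighted_am_gm:
  fixes p q u v :: real
  assumes "p > 0" "q > 0"
  shows "u * v \<le> (q / p) / 2 * u^2 + (p / q) / 2 * v^2"
proof -
  have "2 * (p * q) * (u * v) \<le> q^2 * u^2 + p^2 * v^2"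
    using sum_squares_bound[of "q * u" "p * v"] by (simp add: power2_eq_square algebra_simps)
  then show ?thesis using assms by (simp add: field_simps power2_eq_square)
qed

lemma nonneg_quadratic_discriminant:
  fixes p q s :: real
  assumes "\<And>t. 0 \<le> p + t * q + t^2 * s" "s \<ge> 0"
  shows "q^2 \<le> 4 * p * s"
proof (cases "s = 0")
  case True
  have "q = 0"
  proof (rule ccontr)
    assume q: "q \<noteq> 0"
    have "0 \<le> p + (-(\<bar>p\<bar> + 1) / q) * q" using assms(1)[of "-(\<bar>p\<bar> + 1) / q"] True by simp
    then show False using q by simp
  qed
  thus ?thesis using True by simp
next
  case False
  hence s: "s > 0" using assms(2) by simp
  \<comment> \<open>evaluate at the vertex \<open>t = - q / (2 s)\<close>\<close>
  have "0 \<le> p + (-q / (2 * s)) * q + (-q / (2 * s))^2 * s" by (rule assms(1))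
  also have "\<dots> = p - q^2 / (4 * s)" using s by (simp add: field_simps power2_eq_square)
  finally show ?thesis using s by (simp add: field_simps)
qed

lemma l2_Cauchy_Schwarz:
  assumes "x \<in> l2" "y \<in> l2"
  shows "cmod (l2_inner x y) \<le> l2_norm x * l2_norm y"
proof (cases "l2_norm x = 0 \<or> l2_norm y = 0")
  case True
  hence "x = (\<lambda>i. 0) \<or> y = (\<lambda>i. 0)" using l2_norm_eq_zeroD assms by blast
  thus ?thesis using l2_norm_nonneg[of x] l2_norm_nonneg[of y] by auto
next
  case False
  define p where "p = l2_norm x"
  define q where "q = l2_norm y"
  have p: "p > 0" and q: "q > 0" using False l2_norm_nonneg p_def q_def
    by (metis less_eq_real_def)+
  have sx: "(\<lambda>i. (cmod (x i))^2) summable_on UNIV" and sy: "(\<lambda>i. (cmod (y i))^2) summable_on UNIV"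
    using assms by (auto simp: l2_def)
  have "cmod (l2_inner x y) \<le> infsum (\<lambda>i. norm (cnj (x i) * y i)) UNIV"
    unfolding l2_inner_def
    by (rule norm_infsum_le[OF has_sum_infsum has_sum_infsum])
       (auto intro: l2_inner_summable assms l2_inner_abs_summable)
  \<comment> \<open>the weights make both sums below equal to \<open>p * q / 2\<close>\<close>
  also have "\<dots> \<le> infsum (\<lambda>i. (q / p) / 2 * (cmod (x i))^2 + (p / q) / 2 * (cmod (y i))^2) UNIV"
    using weighted_am_gm[OF p q]
    by (intro infsum_mono l2_inner_abs_summable[OF assms] summable_on_add summable_on_cmult_right sx sy)
       (simp add: norm_mult)
  also have "\<dots> = (q / p) / 2 * infsum (\<lambda>i. (cmod (x i))^2) UNIV
                 + (p / q) / 2 * infsum (\<lambda>i. (cmod (y i))^2) UNIV"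
    by (simp only: infsum_add[OF summable_on_cmult_right[OF sx] summable_on_cmult_right[OF sy]]
        infsum_cmult_right')
  also have "\<dots> = (q / p) / 2 * p^2 + (p / q) / 2 * q^2"
    by (simp only: l2_norm_power2 p_def q_def)
  also have "\<dots> = p * q" using p q by (simp add: field_simps power2_eq_square)
  finally show ?thesis by (simp add: p_def q_def)
qed

lemma l2_norm_triangle:
  assumes "x \<in> l2" "y \<in> l2"
  shows "l2_norm (\<lambda>i. x i + y i) \<le> l2_norm x + l2_norm y"
proof -
  have xy: "(\<lambda>i. x i + y i) \<in> l2" using assms by (rule l2_add)
  have "l2_inner (\<lambda>i. x i + y i) (\<lambda>i. x i + y i)
     = l2_inner x x + l2_inner x y + (l2_inner y x + l2_inner y y)"
    by (simp add: l2_inner_add_left l2_inner_add_right xy assms)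
  hence "(l2_norm (\<lambda>i. x i + y i))^2 = (l2_norm x)^2 + (l2_norm y)^2 + Re (l2_inner x y + l2_inner y x)"
    using l2_inner_self[OF xy] l2_inner_self[OF assms(1)] l2_inner_self[OF assms(2)]
    by (metis (no_types, lifting) Re_complex_of_real add.commute add.left_commute plus_complex.sel(1))
  also have "Re (l2_inner x y + l2_inner y x) \<le> 2 * (l2_norm x * l2_norm y)"
    using complex_Re_le_cmod[of "l2_inner x y"] complex_Re_le_cmod[of "l2_inner y x"]
      l2_Cauchy_Schwarz[OF assms] l2_Cauchy_Schwarz[OF assms(2,1)] by (simp add: mult.commute)
  finally have "(l2_norm (\<lambda>i. x i + y i))^2 \<le> (l2_norm x + l2_norm y)^2"
    by (simp add: power2_eq_square algebra_simps)
  thus ?thesis using l2_norm_nonneg[of x] l2_norm_nonneg[of y]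
    by (meson add_nonneg_nonneg power2_le_imp_le)
qed

section \<open>Bounded operators\<close>

lemma bdd_opI:
  assumes "\<And>x. x \<in> l2 \<Longrightarrow> T x \<in> l2"
    and "\<And>x y a b. x \<in> l2 \<Longrightarrow> y \<in> l2 \<Longrightarrow> T (\<lambda>i. a * x i + b * y i) = (\<lambda>i. a * T x i + b * T y i)"
    and "\<And>x. x \<in> l2 \<Longrightarrow> l2_norm (T x) \<le> K * l2_norm x"
    and "\<And>x. x \<notin> l2 \<Longrightarrow> T x = (\<lambda>i. 0)"
  shows "is_bdd_op T"
  unfolding is_bdd_op_def using assms by blast

lemma bdd_op_in_l2: "is_bdd_op T \<Longrightarrow> T x \<in> l2"
  unfolding is_bdd_op_def by (cases "x \<in> l2") auto

lemma bdd_op_lincomb: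
  "is_bdd_op T \<Longrightarrow> x \<in> l2 \<Longrightarrow> y \<in> l2 \<Longrightarrow> T (\<lambda>i. a * x i + b * y i) = (\<lambda>i. a * T x i + b * T y i)"
  unfolding is_bdd_op_def by blast

lemma bdd_op_outside_l2: "is_bdd_op T \<Longrightarrow> x \<notin> l2 \<Longrightarrow> T x = (\<lambda>i. 0)"
  unfolding is_bdd_op_def by blast

lemma bdd_op_bound:
  assumes "is_bdd_op T"
  obtains K where "K \<ge> 0" "\<And>x. x \<in> l2 \<Longrightarrow> l2_norm (T x) \<le> K * l2_norm x"
proof -
  obtain K where K: "\<forall>x\<in>l2. l2_norm (T x) \<le> K * l2_norm x"
    using assms unfolding is_bdd_op_def by blast
  have "l2_norm (T x) \<le> max K 0 * l2_norm x" if "x \<in> l2" for x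
    using K that l2_norm_nonneg[of x] by (meson max.cobounded1 mult_right_mono order_trans)
  then show ?thesis using that[of "max K 0"] by simp
qed

lemma bdd_op_zero_vec: "is_bdd_op T \<Longrightarrow> T (\<lambda>i. 0) = (\<lambda>i. 0)"
  using bdd_op_lincomb[of T "\<lambda>i. 0" "\<lambda>i. 0" 0 0] by simp

lemma bdd_op_add_vec: "is_bdd_op T \<Longrightarrow> x \<in> l2 \<Longrightarrow> y \<in> l2 \<Longrightarrow> T (\<lambda>i. x i + y i) = (\<lambda>i. T x i + T y i)"
  using bdd_op_lincomb[of T x y 1 1] by simp

lemma bdd_op_scale_vec: "is_bdd_op T \<Longrightarrow> x \<in> l2 \<Longrightarrow> T (\<lambda>i. c * x i) = (\<lambda>i. c * T x i)"
  using bdd_op_lincomb[of T x x c 0] by simp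

lemma bdd_above_op_norm_set:
  assumes "is_bdd_op T"
  shows "bdd_above {l2_norm (T x) | x. x \<in> l2 \<and> l2_norm x \<le> 1}"
proof -
  obtain K where K0: "K \<ge> 0" and K: "\<And>x. x \<in> l2 \<Longrightarrow> l2_norm (T x) \<le> K * l2_norm x"
    using bdd_op_bound[OF assms] by blast
  have "l2_norm (T x) \<le> K" if "x \<in> l2" "l2_norm x \<le> 1" for x
    using K[OF that(1)] that(2) K0 by (meson mult_left_le order_trans)
  then show ?thesis by (intro bdd_aboveI[where M=K]) blast
qed

lemma op_norm_bound:
  assumes T: "is_bdd_op T" and x: "x \<in> l2"
  shows "l2_norm (T x) \<le> op_norm T * l2_norm x"
proof (cases "l2_norm x = 0")
  case True
  hence "T x = (\<lambda>i. 0)" using l2_norm_eq_zeroD[OF x] bdd_op_zero_vec[OF T] by simp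
  thus ?thesis using True by (simp add: l2_norm_def)
next
  case False
  hence n: "l2_norm x > 0" using l2_norm_nonneg[of x] by linarith
  define x' where "x' = (\<lambda>i. complex_of_real (1 / l2_norm x) * x i)"
  have "x' \<in> l2" unfolding x'_def using x by (rule l2_scale)
  moreover have "l2_norm x' = 1" unfolding x'_def l2_norm_scale using n by (simp add: norm_divide)
  ultimately have "l2_norm (T x') \<le> op_norm T"
    unfolding op_norm_def by (intro cSup_upper[OF _ bdd_above_op_norm_set[OF T]]) auto
  moreover have "l2_norm (T x') = l2_norm (T x) / l2_norm x"
    unfolding x'_def bdd_op_scale_vec[OF T x] l2_norm_scale using n by (simp add: norm_divide)
  ultimately show ?thesis using n by (simp add: field_simps)
qed

lemma op_norm_nonneg:
  assumes "is_bdd_op T"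
  shows "op_norm T \<ge> 0"
proof -
  have "l2_norm (T (\<lambda>i. 0)) \<le> op_norm T"
    unfolding op_norm_def
    by (rule cSup_upper[OF _ bdd_above_op_norm_set[OF assms]]) (auto simp: l2_norm_def)
  thus ?thesis using l2_norm_nonneg[of "T (\<lambda>i. 0)"] by linarith
qed

lemma op_norm_sub_commute: "op_norm (op_sub S T) = op_norm (op_sub T S)"
proof -
  have "l2_norm (op_sub S T x) = l2_norm (op_sub T S x)" for x
    using l2_norm_scale[of "-1" "op_sub T S x"] by (simp add: op_sub_def)
  then show ?thesis by (simp add: op_norm_def)
qed

lemma bdd_op_zero: "is_bdd_op op_zero"
  by (rule bdd_opI[where K=0]) (auto simp: op_zero_def l2_norm_def)

lemma bdd_op_id: "is_bdd_op op_id"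
  by (rule bdd_opI[where K=1]) (auto simp: op_id_def l2_lincomb)

lemma bdd_op_add:
  assumes "is_bdd_op S" "is_bdd_op T"
  shows "is_bdd_op (op_add S T)"
proof -
  obtain K1 where K1: "\<And>x. x \<in> l2 \<Longrightarrow> l2_norm (S x) \<le> K1 * l2_norm x"
    using bdd_op_bound[OF assms(1)] by blast
  obtain K2 where K2: "\<And>x. x \<in> l2 \<Longrightarrow> l2_norm (T x) \<le> K2 * l2_norm x"
    using bdd_op_bound[OF assms(2)] by blast
  show ?thesis
  proof (rule bdd_opI[where K="K1 + K2"])
    fix x :: "'a vec" assume x: "x \<in> l2"
    have "l2_norm (op_add S T x) \<le> l2_norm (S x) + l2_norm (T x)"
      unfolding op_add_def by (rule l2_norm_triangle) (auto intro: bdd_op_in_l2 assms)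
    also have "\<dots> \<le> (K1 + K2) * l2_norm x" using K1[OF x] K2[OF x] by (simp add: algebra_simps)
    finally show "l2_norm (op_add S T x) \<le> (K1 + K2) * l2_norm x" .
  next
    fix x y :: "'a vec" and a b assume "x \<in> l2" "y \<in> l2"
    then show "op_add S T (\<lambda>i. a * x i + b * y i) = (\<lambda>i. a * op_add S T x i + b * op_add S T y i)"
      using bdd_op_lincomb[OF assms(1)] bdd_op_lincomb[OF assms(2)]
      by (simp add: op_add_def algebra_simps)
  qed (simp_all add: op_add_def bdd_op_outside_l2 assms l2_add bdd_op_in_l2)
qed

lemma bdd_op_scale:
  assumes "is_bdd_op T"
  shows "is_bdd_op (op_scale c T)"
proof -
  obtain K where K: "\<And>x. x \<in> l2 \<Longrightarrow> l2_norm (T x) \<le> K * l2_norm x"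
    using bdd_op_bound[OF assms] by blast
  show ?thesis
  proof (rule bdd_opI[where K="cmod c * K"])
    fix x :: "'a vec" assume "x \<in> l2"
    then show "l2_norm (op_scale c T x) \<le> (cmod c * K) * l2_norm x"
      unfolding op_scale_def l2_norm_scale using K by (simp add: mult.assoc mult_left_mono)
  next
    fix x y :: "'a vec" and a b assume "x \<in> l2" "y \<in> l2"
    then show "op_scale c T (\<lambda>i. a * x i + b * y i) = (\<lambda>i. a * op_scale c T x i + b * op_scale c T y i)"
      using bdd_op_lincomb[OF assms] by (simp add: op_scale_def algebra_simps)
  qed (simp_all add: op_scale_def bdd_op_outside_l2 assms l2_scale bdd_op_in_l2)
qed

lemma op_sub_conv_add: "op_sub S T = op_add S (op_scale (-1) T)"
  by (simp add: op_sub_def op_add_def op_scale_def)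

lemma bdd_op_sub: "is_bdd_op S \<Longrightarrow> is_bdd_op T \<Longrightarrow> is_bdd_op (op_sub S T)"
  unfolding op_sub_conv_add by (intro bdd_op_add bdd_op_scale)

lemma bdd_op_comp:
  assumes "is_bdd_op S" "is_bdd_op T"
  shows "is_bdd_op (S \<circ> T)"
proof -
  obtain K1 where K10: "K1 \<ge> 0" and K1: "\<And>x. x \<in> l2 \<Longrightarrow> l2_norm (S x) \<le> K1 * l2_norm x"
    using bdd_op_bound[OF assms(1)] by blast
  obtain K2 where K2: "\<And>x. x \<in> l2 \<Longrightarrow> l2_norm (T x) \<le> K2 * l2_norm x"
    using bdd_op_bound[OF assms(2)] by blast
  show ?thesis
  proof (rule bdd_opI[where K="K1 * K2"])
    fix x :: "'a vec" assume x: "x \<in> l2"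
    have "l2_norm ((S \<circ> T) x) \<le> K1 * l2_norm (T x)" using K1 bdd_op_in_l2[OF assms(2)] by simp
    also have "\<dots> \<le> K1 * (K2 * l2_norm x)" using K2[OF x] K10 by (simp add: mult_left_mono)
    finally show "l2_norm ((S \<circ> T) x) \<le> (K1 * K2) * l2_norm x" by (simp add: mult.assoc)
  next
    fix x y :: "'a vec" and a b assume "x \<in> l2" "y \<in> l2"
    then show "(S \<circ> T) (\<lambda>i. a * x i + b * y i) = (\<lambda>i. a * (S \<circ> T) x i + b * (S \<circ> T) y i)"
      by (simp add: bdd_op_lincomb[OF assms(2)] bdd_op_lincomb[OF assms(1)] bdd_op_in_l2[OF assms(2)])
  qed (simp_all add: bdd_op_in_l2 assms bdd_op_outside_l2 bdd_op_zero_vec)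
qed

lemma op_id_comp: "is_bdd_op T \<Longrightarrow> op_id \<circ> T = T"
  by (rule ext) (simp add: op_id_def bdd_op_in_l2)

lemma comp_op_id: "is_bdd_op T \<Longrightarrow> T \<circ> op_id = T"
  by (rule ext) (simp add: op_id_def bdd_op_outside_l2 bdd_op_zero_vec)

lemma op_add_comp: "op_add X Y \<circ> Z = op_add (X \<circ> Z) (Y \<circ> Z)"
  by (simp add: op_add_def fun_eq_iff)

lemma op_scale_comp: "op_scale c X \<circ> Z = op_scale c (X \<circ> Z)"
  by (simp add: op_scale_def fun_eq_iff)

lemma op_zero_comp: "op_zero \<circ> P = op_zero"
  by (simp add: op_zero_def fun_eq_iff)

lemma comp_op_add: "is_bdd_op P \<Longrightarrow> is_bdd_op X \<Longrightarrow> is_bdd_op Y \<Longrightarrow> P \<circ> op_add X Y = op_add (P \<circ> X) (P \<circ> Y)"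
  by (simp add: op_add_def fun_eq_iff bdd_op_add_vec bdd_op_in_l2)

lemma comp_op_scale: "is_bdd_op P \<Longrightarrow> is_bdd_op X \<Longrightarrow> P \<circ> op_scale c X = op_scale c (P \<circ> X)"
  by (simp add: op_scale_def fun_eq_iff bdd_op_scale_vec bdd_op_in_l2)

lemma comp_op_zero: "is_bdd_op P \<Longrightarrow> P \<circ> op_zero = op_zero"
  by (simp add: op_zero_def fun_eq_iff bdd_op_zero_vec)

section \<open>Adjoints\<close>

definition unit_vec :: "'i \<Rightarrow> 'i vec" where
  "unit_vec i = (\<lambda>j. if j = i then 1 else 0)"

lemma unit_vec_in_l2: "unit_vec i \<in> l2"
  by (rule finite_support_in_l2[of "{i}"]) (auto simp: unit_vec_def)

lemma l2_inner_unit_vec: "l2_inner (unit_vec i) y = y i"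
  by (subst l2_inner_finite_support[of "{i}"]) (auto simp: unit_vec_def)

lemma l2_sum:
  "finite F \<Longrightarrow> (\<And>i. i \<in> F \<Longrightarrow> v i \<in> l2) \<Longrightarrow> (\<lambda>k. \<Sum>i\<in>F. c i * v i k) \<in> l2"
proof (induction F rule: finite_induct)
  case (insert i F)
  then have "(\<lambda>k. 1 * (\<Sum>i\<in>F. c i * v i k) + c i * v i k) \<in> l2"
    by (intro l2_lincomb) auto
  thus ?case using insert by (simp add: add.commute)
qed simp

lemma l2_inner_sum_left:
  assumes "finite F" "\<And>i. i \<in> F \<Longrightarrow> v i \<in> l2" "y \<in> l2"
  shows "l2_inner (\<lambda>k. \<Sum>i\<in>F. c i * v i k) y = (\<Sum>i\<in>F. cnj (c i) * l2_inner (v i) y)"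
  using assms
proof (induction F rule: finite_induct)
  case (insert i F)
  have "l2_inner (\<lambda>k. 1 * (\<Sum>i\<in>F. c i * v i k) + c i * v i k) y
     = cnj 1 * l2_inner (\<lambda>k. \<Sum>i\<in>F. c i * v i k) y + cnj (c i) * l2_inner (v i) y"
    by (rule l2_inner_lincomb_left) (use insert in \<open>auto intro: l2_sum\<close>)
  thus ?case using insert by (simp add: add.commute)
qed simp

lemma bdd_op_finite_support:
  assumes T: "is_bdd_op T" and F: "finite F"
  shows "T (\<lambda>j. if j \<in> F then c j else 0) = (\<lambda>k. \<Sum>i\<in>F. c i * T (unit_vec i) k)"
  using F
proof (induction F rule: finite_induct)
  case empty thus ?case using bdd_op_zero_vec[OF T] by simp
next
  case (insert i F)
  have "(\<lambda>j. if j \<in> F then c j else 0) \<in> l2"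
    by (rule finite_support_in_l2[OF insert(1)]) auto
  moreover have "(\<lambda>j. if j \<in> insert i F then c j else 0)
      = (\<lambda>j. 1 * (if j \<in> F then c j else 0) + c i * unit_vec i j)"
    using insert(2) by (auto simp: unit_vec_def fun_eq_iff)
  ultimately show ?case
    using insert(1,2) by (simp only: bdd_op_lincomb[OF T _ unit_vec_in_l2] insert(3)) (simp add: fun_eq_iff)
qed

lemma l2_tail_norm_power2:
  assumes x: "x \<in> l2" and F: "finite F"
  shows "(l2_norm (\<lambda>j. if j \<in> F then 0 else x j))^2
     = infsum (\<lambda>j. (cmod (x j))^2) UNIV - (\<Sum>j\<in>F. (cmod (x j))^2)"
proof -
  define f where "f j = (cmod (x j))^2" for j
  have sf: "f summable_on UNIV" using x by (simp add: l2_def f_def[abs_def])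
  have "infsum f UNIV = infsum f F + infsum f (- F)"
    using infsum_Un_disjoint[OF summable_on_subset_banach[OF sf] summable_on_subset_banach[OF sf],
        of F "- F"]
    by (simp add: Un_commute)
  moreover have "(l2_norm (\<lambda>j. if j \<in> F then 0 else x j))^2 = infsum f (- F)"
    unfolding l2_norm_power2 by (rule infsum_cong_neutral) (auto simp: f_def)
  ultimately show ?thesis using F by (simp add: f_def[abs_def])
qed

lemma l2_tail_small:
  assumes x: "x \<in> l2" and e: "e > 0"
  obtains F where "finite F" "l2_norm (\<lambda>j. if j \<in> F then 0 else x j) \<le> e"
proof -
  have "(\<lambda>j. (cmod (x j))^2) summable_on UNIV" using x by (simp add: l2_def)
  then obtain F where F: "finite F"
    and d: "dist (\<Sum>j\<in>F. (cmod (x j))^2) (infsum (\<lambda>j. (cmod (x j))^2) UNIV) \<le> e^2"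
    using infsum_finite_approximation[of _ UNIV "e^2"] e by auto
  have "(l2_norm (\<lambda>j. if j \<in> F then 0 else x j))^2 \<le> e^2"
    unfolding l2_tail_norm_power2[OF x F] using d by (simp add: dist_real_def)
  then show ?thesis
    using that[OF F] e by (meson less_imp_le power2_le_imp_le)
qed

lemma l2_bounded_additive_eq_zero:
  assumes add: "\<And>y z. y \<in> l2 \<Longrightarrow> z \<in> l2 \<Longrightarrow> g (\<lambda>i. y i + z i) = g y + g z"
    and bound: "\<And>z. z \<in> l2 \<Longrightarrow> cmod (g z) \<le> C * l2_norm z"
    and trunc: "\<And>F. finite F \<Longrightarrow> g (\<lambda>j. if j \<in> F then x j else 0) = 0"
    and x: "x \<in> l2"
  shows "g x = 0"
proof -
  have "cmod (g x) \<le> 0 + e" if e: "e > 0" for e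
  proof -
    obtain F where F: "finite F"
      and tail: "l2_norm (\<lambda>j. if j \<in> F then 0 else x j) \<le> e / (\<bar>C\<bar> + 1)"
      using l2_tail_small[OF x, of "e / (\<bar>C\<bar> + 1)"] e by auto
    define r where "r = (\<lambda>j. if j \<in> F then 0 else x j)"
    define xF where "xF = (\<lambda>j. if j \<in> F then x j else 0)"
    have xF: "xF \<in> l2" unfolding xF_def by (rule finite_support_in_l2[OF F]) auto
    have "(\<lambda>i. x i - xF i) \<in> l2" by (rule l2_diff[OF x xF])
    moreover have "(\<lambda>i. x i - xF i) = r" by (auto simp: r_def xF_def)
    ultimately have r: "r \<in> l2" by simp
    have "x = (\<lambda>i. r i + xF i)" by (auto simp: r_def xF_def)
    then have "g x = g r" using add[OF r xF] trunc[OF F] by (simp add: xF_def)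
    also have "cmod (g r) \<le> \<bar>C\<bar> * l2_norm r"
      using bound[OF r] l2_norm_nonneg[of r] by (meson abs_ge_self mult_right_mono order_trans)
    also have "\<dots> \<le> \<bar>C\<bar> * (e / (\<bar>C\<bar> + 1))"
      unfolding r_def by (rule mult_left_mono[OF tail abs_ge_zero])
    also have "\<dots> \<le> e" using e by (simp add: field_simps)
    finally show ?thesis by simp
  qed
  then show ?thesis using field_le_epsilon[of "cmod (g x)" 0] by simp
qed

definition conj_transpose :: "'i op \<Rightarrow> 'i op" where
  "conj_transpose T = (\<lambda>y. if y \<in> l2 then (\<lambda>i. l2_inner (T (unit_vec i)) y) else (\<lambda>i. 0))"

lemma conj_transpose_partial_sums:
  assumes T: "is_bdd_op T" and K: "\<And>x. x \<in> l2 \<Longrightarrow> l2_norm (T x) \<le> K * l2_norm x"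
    and y: "y \<in> l2" and F: "finite F"
  shows "(\<Sum>i\<in>F. (cmod (l2_inner (T (unit_vec i)) y))^2) \<le> (K * l2_norm y)^2"
proof -
  define c where "c i = l2_inner (T (unit_vec i)) y" for i
  define z where "z = (\<lambda>j. if j \<in> F then c j else 0)"
  define s where "s = (\<Sum>i\<in>F. (cmod (c i))^2)"
  have s0: "s \<ge> 0" unfolding s_def by (simp add: sum_nonneg)
  have z: "z \<in> l2" unfolding z_def by (rule finite_support_in_l2[OF F]) auto
  have "(l2_norm z)^2 = s"
    unfolding s_def by (subst l2_norm_power2_finite_support[OF F]) (auto simp: z_def)
  hence nz: "l2_norm z = sqrt s" using l2_norm_nonneg[of z] by (metis real_sqrt_unique)
  \<comment> \<open>testing \<open>T\<^sup>* y\<close> against its own truncation \<open>z\<close>\<close>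
  have "l2_inner (T z) y = (\<Sum>i\<in>F. cnj (c i) * c i)"
    unfolding z_def bdd_op_finite_support[OF T F] c_def
    by (rule l2_inner_sum_left[OF F _ y]) (simp add: bdd_op_in_l2[OF T])
  also have "\<dots> = of_real s"
    unfolding s_def of_real_sum by (simp only: cnj_mult_self)
  finally have "s \<le> l2_norm (T z) * l2_norm y"
    using l2_Cauchy_Schwarz[OF bdd_op_in_l2[OF T] y, of z] s0 by simp
  also have "\<dots> \<le> K * sqrt s * l2_norm y"
    using K[OF z] l2_norm_nonneg[of y] nz by (simp add: mult_right_mono)
  finally have "sqrt s * sqrt s \<le> sqrt s * (K * l2_norm y)" using s0 by (simp add: mult_ac)
  then have "sqrt s \<le> K * l2_norm y \<or> s = 0"
    using s0 by (metis mult_le_cancel_left_pos real_sqrt_gt_0_iff less_eq_real_def)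
  then have "s \<le> (K * l2_norm y)^2"
  proof
    assume "sqrt s \<le> K * l2_norm y"
    then have "(sqrt s)^2 \<le> (K * l2_norm y)^2" by (rule power_mono) (simp add: s0)
    then show ?thesis using s0 by simp
  qed simp
  thus ?thesis by (simp add: s_def c_def)
qed

lemma conj_transpose_bound:
  assumes T: "is_bdd_op T" and K0: "K \<ge> 0" and K: "\<And>x. x \<in> l2 \<Longrightarrow> l2_norm (T x) \<le> K * l2_norm x"
    and y: "y \<in> l2"
  shows "conj_transpose T y \<in> l2" "l2_norm (conj_transpose T y) \<le> K * l2_norm y"
proof -
  have sm: "(\<lambda>i. (cmod (l2_inner (T (unit_vec i)) y))^2) summable_on UNIV"
    using conj_transpose_partial_sums[OF T K y]
    by (intro nonneg_bdd_above_summable_on bdd_aboveI) auto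
  then show "conj_transpose T y \<in> l2" using y by (simp add: conj_transpose_def l2_def)
  have "infsum (\<lambda>i. (cmod (l2_inner (T (unit_vec i)) y))^2) UNIV \<le> (K * l2_norm y)^2"
    by (rule infsum_le_finite_sums[OF sm]) (use conj_transpose_partial_sums[OF T K y] in auto)
  hence "(l2_norm (conj_transpose T y))^2 \<le> (K * l2_norm y)^2"
    using y by (simp add: l2_norm_power2 conj_transpose_def)
  thus "l2_norm (conj_transpose T y) \<le> K * l2_norm y"
    using K0 l2_norm_nonneg[of y] by (meson mult_nonneg_nonneg power2_le_imp_le)
qed

lemma bdd_op_conj_transpose:
  assumes T: "is_bdd_op T"
  shows "is_bdd_op (conj_transpose T)"
proof -
  obtain K where K0: "K \<ge> 0" and K: "\<And>x. x \<in> l2 \<Longrightarrow> l2_norm (T x) \<le> K * l2_norm x"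
    using bdd_op_bound[OF T] by blast
  show ?thesis
  proof (rule bdd_opI[where K=K])
    fix x y :: "'a vec" and a b assume xy: "x \<in> l2" "y \<in> l2"
    show "conj_transpose T (\<lambda>i. a * x i + b * y i)
        = (\<lambda>i. a * conj_transpose T x i + b * conj_transpose T y i)"
      using xy l2_lincomb[OF xy, of a b] l2_inner_lincomb_right[OF bdd_op_in_l2[OF T] xy]
      by (simp add: conj_transpose_def)
  qed (use conj_transpose_bound[OF T K0 K] in \<open>auto simp: conj_transpose_def\<close>)
qed

lemma conj_transpose_inner:
  assumes T: "is_bdd_op T" and x: "x \<in> l2" and y: "y \<in> l2"
  shows "l2_inner (T x) y = l2_inner x (conj_transpose T y)"
proof -
  obtain K where K0: "K \<ge> 0" and K: "\<And>x. x \<in> l2 \<Longrightarrow> l2_norm (T x) \<le> K * l2_norm x"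
    using bdd_op_bound[OF T] by blast
  define S where "S = conj_transpose T y"
  have S: "S \<in> l2" unfolding S_def by (rule conj_transpose_bound(1)[OF T K0 K y])
  define g where "g z = l2_inner (T z) y - l2_inner z S" for z
  have "g x = 0"
  proof (rule l2_bounded_additive_eq_zero[where C="K * l2_norm y + l2_norm S", OF _ _ _ x])
    fix u v :: "'a vec" assume uv: "u \<in> l2" "v \<in> l2"
    then show "g (\<lambda>i. u i + v i) = g u + g v"
      by (simp add: g_def bdd_op_add_vec[OF T uv] l2_inner_add_left bdd_op_in_l2[OF T] y S)
  next
    fix z :: "'a vec" assume z: "z \<in> l2"
    have "cmod (g z) \<le> l2_norm (T z) * l2_norm y + l2_norm z * l2_norm S"
      unfolding g_def
      by (rule order_trans[OF norm_triangle_ineq4])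
         (intro add_mono l2_Cauchy_Schwarz bdd_op_in_l2[OF T] y z S)
    also have "\<dots> \<le> K * l2_norm z * l2_norm y + l2_norm z * l2_norm S"
      using K[OF z] l2_norm_nonneg[of y] by (simp add: mult_right_mono)
    finally show "cmod (g z) \<le> (K * l2_norm y + l2_norm S) * l2_norm z"
      by (simp add: algebra_simps)
  next
    fix F :: "'a set" assume F: "finite F"
    have "l2_inner (T (\<lambda>j. if j \<in> F then x j else 0)) y
        = (\<Sum>i\<in>F. cnj (x i) * l2_inner (T (unit_vec i)) y)"
      unfolding bdd_op_finite_support[OF T F]
      by (rule l2_inner_sum_left[OF F _ y]) (simp add: bdd_op_in_l2[OF T])
    moreover have "l2_inner (\<lambda>j. if j \<in> F then x j else 0) S = (\<Sum>j\<in>F. cnj (x j) * S j)"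
      by (subst l2_inner_finite_support[OF F]) auto
    ultimately show "g (\<lambda>j. if j \<in> F then x j else 0) = 0"
      using y by (simp add: g_def S_def conj_transpose_def)
  qed
  thus ?thesis by (simp add: g_def S_def)
qed

lemma adjoint_unique:
  assumes "is_adjoint T S1" "is_adjoint T S2"
  shows "S1 = S2"
proof
  fix y
  have b1: "is_bdd_op S1" and b2: "is_bdd_op S2" using assms by (auto simp: is_adjoint_def)
  show "S1 y = S2 y"
  proof (cases "y \<in> l2")
    case True
    show ?thesis
    proof
      fix i
      have "S1 y i = l2_inner (unit_vec i) (S1 y)" by (simp add: l2_inner_unit_vec)
      also have "\<dots> = l2_inner (T (unit_vec i)) y"
        using assms(1) True unit_vec_in_l2 unfolding is_adjoint_def by metis
      also have "\<dots> = l2_inner (unit_vec i) (S2 y)"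
        using assms(2) True unit_vec_in_l2 unfolding is_adjoint_def by metis
      finally show "S1 y i = S2 y i" by (simp add: l2_inner_unit_vec)
    qed
  qed (simp add: bdd_op_outside_l2[OF b1] bdd_op_outside_l2[OF b2])
qed

lemma is_adjoint_adj:
  assumes "is_bdd_op T"
  shows "is_adjoint T (adj T)"
proof -
  have ex: "is_adjoint T (conj_transpose T)"
    unfolding is_adjoint_def using bdd_op_conj_transpose conj_transpose_inner assms by blast
  show ?thesis
    unfolding adj_def by (rule theI[of "is_adjoint T", OF ex]) (rule adjoint_unique[OF _ ex])
qed

lemma adj_eqI: "is_bdd_op T \<Longrightarrow> is_adjoint T S \<Longrightarrow> adj T = S"
  using is_adjoint_adj adjoint_unique by blast

lemma bdd_op_adj: "is_bdd_op T \<Longrightarrow> is_bdd_op (adj T)"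
  using is_adjoint_adj is_adjoint_def by blast

lemma adj_inner: "is_bdd_op T \<Longrightarrow> x \<in> l2 \<Longrightarrow> y \<in> l2 \<Longrightarrow> l2_inner (T x) y = l2_inner x (adj T y)"
  using is_adjoint_adj is_adjoint_def by blast

lemma adj_inner_left:
  "is_bdd_op T \<Longrightarrow> x \<in> l2 \<Longrightarrow> y \<in> l2 \<Longrightarrow> l2_inner (adj T x) y = l2_inner x (T y)"
  by (metis adj_inner l2_inner_commute)

lemma adj_adj: "is_bdd_op T \<Longrightarrow> adj (adj T) = T"
  by (rule adj_eqI) (auto simp: is_adjoint_def bdd_op_adj adj_inner_left)

lemma adj_comp:
  assumes "is_bdd_op S" "is_bdd_op T"
  shows "adj (S \<circ> T) = adj T \<circ> adj S"
proof (rule adj_eqI)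
  show "is_adjoint (S \<circ> T) (adj T \<circ> adj S)" unfolding is_adjoint_def
  proof (intro conjI ballI)
    fix x y :: "'a vec" assume xy: "x \<in> l2" "y \<in> l2"
    have "l2_inner ((S \<circ> T) x) y = l2_inner (T x) (adj S y)"
      using adj_inner[OF assms(1) bdd_op_in_l2[OF assms(2)] xy(2)] by simp
    also have "\<dots> = l2_inner x (adj T (adj S y))"
      by (rule adj_inner[OF assms(2) xy(1) bdd_op_in_l2[OF bdd_op_adj[OF assms(1)]]])
    finally show "l2_inner ((S \<circ> T) x) y = l2_inner x ((adj T \<circ> adj S) y)" by simp
  qed (simp add: assms bdd_op_comp bdd_op_adj)
qed (simp add: assms bdd_op_comp)

lemma adj_add:
  assumes "is_bdd_op S" "is_bdd_op T"
  shows "adj (op_add S T) = op_add (adj S) (adj T)"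
proof (rule adj_eqI)
  show "is_adjoint (op_add S T) (op_add (adj S) (adj T))" unfolding is_adjoint_def
  proof (intro conjI ballI)
    fix x y :: "'a vec" assume xy: "x \<in> l2" "y \<in> l2"
    have "l2_inner (op_add S T x) y = l2_inner (S x) y + l2_inner (T x) y"
      unfolding op_add_def by (rule l2_inner_add_left) (auto intro: bdd_op_in_l2 assms xy)
    also have "\<dots> = l2_inner x (adj S y) + l2_inner x (adj T y)"
      using adj_inner[OF assms(1) xy] adj_inner[OF assms(2) xy] by simp
    also have "\<dots> = l2_inner x (op_add (adj S) (adj T) y)"
      unfolding op_add_def by (rule l2_inner_add_right[symmetric]) (auto intro: bdd_op_in_l2 bdd_op_adj assms xy)
    finally show "l2_inner (op_add S T x) y = l2_inner x (op_add (adj S) (adj T) y)" .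
  qed (simp add: assms bdd_op_add bdd_op_adj)
qed (simp add: assms bdd_op_add)

lemma adj_scale:
  assumes "is_bdd_op T"
  shows "adj (op_scale c T) = op_scale (cnj c) (adj T)"
proof (rule adj_eqI)
  show "is_adjoint (op_scale c T) (op_scale (cnj c) (adj T))" unfolding is_adjoint_def
  proof (intro conjI ballI)
    fix x y :: "'a vec" assume xy: "x \<in> l2" "y \<in> l2"
    have "l2_inner (op_scale c T x) y = cnj c * l2_inner (T x) y"
      unfolding op_scale_def by (rule l2_inner_scale_left) (auto intro: bdd_op_in_l2 assms xy)
    also have "\<dots> = cnj c * l2_inner x (adj T y)"
      using adj_inner[OF assms xy] by simp
    also have "\<dots> = l2_inner x (op_scale (cnj c) (adj T) y)"
      unfolding op_scale_def by (rule l2_inner_scale_right[symmetric]) (auto intro: bdd_op_in_l2 bdd_op_adj assms xy)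
    finally show "l2_inner (op_scale c T x) y = l2_inner x (op_scale (cnj c) (adj T) y)" .
  qed (simp add: assms bdd_op_scale bdd_op_adj)
qed (simp add: assms bdd_op_scale)

lemma adj_op_id: "adj op_id = op_id"
  by (rule adj_eqI[OF bdd_op_id]) (simp add: is_adjoint_def bdd_op_id, simp add: op_id_def)

lemma adj_op_zero: "adj op_zero = op_zero"
  by (rule adj_eqI[OF bdd_op_zero]) (simp add: is_adjoint_def bdd_op_zero, simp add: op_zero_def)

lemma adj_sub: "is_bdd_op S \<Longrightarrow> is_bdd_op T \<Longrightarrow> adj (op_sub S T) = op_sub (adj S) (adj T)"
  unfolding op_sub_conv_add by (simp add: adj_add adj_scale bdd_op_scale)

lemma commutant_closed:
  assumes B: "\<forall>s\<in>B. is_bdd_op s"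
  shows "op_id \<in> commutant B" "op_zero \<in> commutant B"
    "X \<in> commutant B \<Longrightarrow> Y \<in> commutant B \<Longrightarrow> op_add X Y \<in> commutant B"
    "X \<in> commutant B \<Longrightarrow> op_scale c X \<in> commutant B"
    "X \<in> commutant B \<Longrightarrow> Y \<in> commutant B \<Longrightarrow> X \<circ> Y \<in> commutant B"
proof -
  show "op_id \<in> commutant B" unfolding commutant_def using B
    by (auto simp: bdd_op_id op_id_comp comp_op_id)
  show "op_zero \<in> commutant B" unfolding commutant_def using B
    by (auto simp: bdd_op_zero comp_op_zero op_zero_comp)
  show "X \<in> commutant B \<Longrightarrow> Y \<in> commutant B \<Longrightarrow> op_add X Y \<in> commutant B"
    unfolding commutant_def using B by (auto simp: bdd_op_add op_add_comp comp_op_add)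
  show "X \<in> commutant B \<Longrightarrow> op_scale c X \<in> commutant B"
    unfolding commutant_def using B by (auto simp: bdd_op_scale op_scale_comp comp_op_scale)
  show "X \<circ> Y \<in> commutant B" if X: "X \<in> commutant B" and Y: "Y \<in> commutant B"
  proof -
    have "(X \<circ> Y) \<circ> s = s \<circ> (X \<circ> Y)" if s: "s \<in> B" for s
    proof -
      have "X \<circ> s = s \<circ> X" and "Y \<circ> s = s \<circ> Y" using X Y s by (auto simp: commutant_def)
      then show ?thesis by (metis comp_assoc)
    qed
    then show ?thesis using X Y by (auto simp: commutant_def bdd_op_comp)
  qed
qed

lemma commutant_bdd_op: "\<forall>s\<in>commutant B. is_bdd_op s"
  by (simp add: commutant_def)

lemma self_adjoint_adj_comp_self: "is_bdd_op X \<Longrightarrow> self_adjoint (adj X \<circ> X)"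
  by (simp add: self_adjoint_def adj_comp bdd_op_adj adj_adj bdd_op_comp)

lemma op_pos_op_norm_bound:
  assumes c: "is_bdd_op c" and e: "is_bdd_op \<eta>"
  shows "op_pos (op_sub (op_scale ((op_norm c)^2) (adj \<eta> \<circ> \<eta>)) (adj (c \<circ> \<eta>) \<circ> (c \<circ> \<eta>)))"
  unfolding op_pos_def
proof
  fix x :: "'a vec" assume x: "x \<in> l2"
  define P where "P = adj \<eta> \<circ> \<eta>"
  define Q where "Q = adj (c \<circ> \<eta>) \<circ> (c \<circ> \<eta>)"
  have ex: "\<eta> x \<in> l2" and cex: "c (\<eta> x) \<in> l2" using bdd_op_in_l2 c e by auto
  have Px: "P x \<in> l2" and Qx: "Q x \<in> l2"
    unfolding P_def Q_def by (simp_all add: bdd_op_in_l2 bdd_op_adj bdd_op_comp c e)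
  have hx: "op_sub (op_scale ((op_norm c)^2) P) Q x = (\<lambda>i. (op_norm c)^2 * P x i + (-1) * Q x i)"
    by (simp add: op_sub_def op_scale_def)
  have "l2_inner x (op_sub (op_scale ((op_norm c)^2) P) Q x)
      = (op_norm c)^2 * l2_inner x (P x) + (-1) * l2_inner x (Q x)"
    unfolding hx by (rule l2_inner_lincomb_right[OF x Px Qx])
  also have "\<dots> = of_real ((op_norm c)^2 * (l2_norm (\<eta> x))^2 - (l2_norm (c (\<eta> x)))^2)"
    using adj_inner[OF e x ex, symmetric] adj_inner[OF bdd_op_comp[OF c e] x cex, symmetric]
    by (simp add: P_def Q_def l2_inner_self ex cex)
  finally show "nonneg_complex (l2_inner x (op_sub (op_scale ((op_norm c)^2) P) Q x))"
    using op_norm_bound[OF c ex] l2_norm_nonneg[of "c (\<eta> x)"]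
    by (simp add: nonneg_complex_def power_mult_distrib[symmetric] power_mono)
qed

section \<open>Tracial W*-probability spaces\<close>

locale tracial_W_space =
  fixes A :: "'i op set" and \<tau> :: "'i op \<Rightarrow> complex"
  assumes tracial: "tracial_W_prob_space A \<tau>"
begin

lemma von_neumann: "von_neumann_algebra A"
  using tracial by (simp add: tracial_W_prob_space_def)

lemma A_bdd_op: "X \<in> A \<Longrightarrow> is_bdd_op X"
  using von_neumann by (simp add: von_neumann_algebra_def)

lemma A_adj: "X \<in> A \<Longrightarrow> adj X \<in> A"
  using von_neumann by (simp add: von_neumann_algebra_def)

lemma A_bicommutant: "commutant (commutant A) = A"
  using von_neumann by (simp add: von_neumann_algebra_def)

lemmas A_id = commutant_closed(1)[OF commutant_bdd_op[of A], unfolded A_bicommutant]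
  and A_zero = commutant_closed(2)[OF commutant_bdd_op[of A], unfolded A_bicommutant]
  and A_add = commutant_closed(3)[OF commutant_bdd_op[of A], unfolded A_bicommutant]
  and A_scale = commutant_closed(4)[OF commutant_bdd_op[of A], unfolded A_bicommutant]
  and A_comp = commutant_closed(5)[OF commutant_bdd_op[of A], unfolded A_bicommutant]

lemma A_sub: "X \<in> A \<Longrightarrow> Y \<in> A \<Longrightarrow> op_sub X Y \<in> A"
  unfolding op_sub_conv_add by (intro A_add A_scale)

lemma tau_lincomb: "X \<in> A \<Longrightarrow> Y \<in> A \<Longrightarrow> \<tau> (op_add (op_scale c X) (op_scale d Y)) = c * \<tau> X + d * \<tau> Y"
  using tracial by (simp add: tracial_W_prob_space_def)

lemma tau_add: "X \<in> A \<Longrightarrow> Y \<in> A \<Longrightarrow> \<tau> (op_add X Y) = \<tau> X + \<tau> Y"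
  using tau_lincomb[of X Y 1 1] by (simp add: op_scale_def op_add_def)

lemma tau_scale: "X \<in> A \<Longrightarrow> \<tau> (op_scale c X) = c * \<tau> X"
  using tau_lincomb[of X X c 0] by (simp add: op_scale_def op_add_def)

lemma tau_zero: "\<tau> op_zero = 0"
  using tau_scale[OF A_zero, of 0] by (simp add: op_scale_def op_zero_def)

lemma tau_sub: "X \<in> A \<Longrightarrow> Y \<in> A \<Longrightarrow> \<tau> (op_sub X Y) = \<tau> X - \<tau> Y"
  unfolding op_sub_conv_add by (simp add: tau_add tau_scale A_scale)

lemma tau_id: "\<tau> op_id = 1"
  using tracial by (simp add: tracial_W_prob_space_def)

lemma tau_adj_comp_self_nonneg: "X \<in> A \<Longrightarrow> nonneg_complex (\<tau> (adj X \<circ> X))"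
  using tracial by (simp add: tracial_W_prob_space_def)

text \<open>Positivity of \<open>\<tau>\<close> on positive elements comes from normality, applied to the directed
  family \<open>{0, h}\<close> whose supremum is \<open>h\<close>.\<close>

lemma tau_nonneg_of_pos:
  assumes h: "h \<in> A" "self_adjoint h" "op_pos h"
  shows "Re (\<tau> h) \<ge> 0"
proof -
  have pos_zero: "op_pos op_zero" by (simp add: op_pos_def op_zero_def nonneg_complex_def)
  have sa_zero: "self_adjoint op_zero" by (simp add: self_adjoint_def bdd_op_zero adj_op_zero)
  have "op_sub h op_zero = h" "op_sub h h = op_zero" by (simp_all add: op_sub_def op_zero_def)
  then have le: "op_le op_zero h" "op_le h h" using h(3) pos_zero by (simp_all add: op_le_def)
  have "normal_functional A \<tau>" using tracial by (simp add: tracial_W_prob_space_def)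
  then have "Re (\<tau> h) = Sup ((\<lambda>d. Re (\<tau> d)) ` {op_zero, h})"
    unfolding normal_functional_def using A_zero h sa_zero pos_zero le
    by (elim allE[of _ "{op_zero, h}"] allE[of _ h]) auto
  also have "\<dots> = max 0 (Re (\<tau> h))" by (simp add: tau_zero cSup_insert sup_max)
  finally show ?thesis by simp
qed

definition tr_inner :: "'i op \<Rightarrow> 'i op \<Rightarrow> complex" where
  "tr_inner X Y = \<tau> (adj X \<circ> Y)"

lemma norm2_eq: "norm2 \<tau> X = sqrt (Re (tr_inner X X))"
  by (simp add: norm2_def tr_inner_def)

lemma tr_inner_add_left: "X \<in> A \<Longrightarrow> Y \<in> A \<Longrightarrow> Z \<in> A \<Longrightarrow> tr_inner (op_add X Y) Z = tr_inner X Z + tr_inner Y Z"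
  unfolding tr_inner_def by (simp add: adj_add op_add_comp A_bdd_op tau_add A_comp A_adj)

lemma tr_inner_add_right: "X \<in> A \<Longrightarrow> Y \<in> A \<Longrightarrow> Z \<in> A \<Longrightarrow> tr_inner X (op_add Y Z) = tr_inner X Y + tr_inner X Z"
  unfolding tr_inner_def by (simp add: comp_op_add bdd_op_adj A_bdd_op tau_add A_comp A_adj)

lemma tr_inner_scale_left: "X \<in> A \<Longrightarrow> Y \<in> A \<Longrightarrow> tr_inner (op_scale c X) Y = cnj c * tr_inner X Y"
  unfolding tr_inner_def by (simp add: adj_scale op_scale_comp A_bdd_op tau_scale A_comp A_adj)

lemma tr_inner_scale_right: "X \<in> A \<Longrightarrow> Y \<in> A \<Longrightarrow> tr_inner X (op_scale c Y) = c * tr_inner X Y"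
  unfolding tr_inner_def by (simp add: comp_op_scale bdd_op_adj A_bdd_op tau_scale A_comp A_adj)

lemma tr_inner_diff_left: "X \<in> A \<Longrightarrow> Y \<in> A \<Longrightarrow> Z \<in> A \<Longrightarrow> tr_inner (op_sub X Y) Z = tr_inner X Z - tr_inner Y Z"
  unfolding op_sub_conv_add by (simp add: tr_inner_add_left tr_inner_scale_left A_scale)

lemma tr_inner_diff_right: "X \<in> A \<Longrightarrow> Y \<in> A \<Longrightarrow> Z \<in> A \<Longrightarrow> tr_inner X (op_sub Y Z) = tr_inner X Y - tr_inner X Z"
  unfolding op_sub_conv_add by (simp add: tr_inner_add_right tr_inner_scale_right A_scale)

lemma tr_inner_zero_left: "tr_inner op_zero Y = 0"
  unfolding tr_inner_def by (simp add: adj_op_zero op_zero_comp tau_zero)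

lemma tr_inner_zero_right: "X \<in> A \<Longrightarrow> tr_inner X op_zero = 0"
  unfolding tr_inner_def by (simp add: comp_op_zero bdd_op_adj A_bdd_op tau_zero)

lemma tr_inner_self_real: "X \<in> A \<Longrightarrow> Im (tr_inner X X) = 0"
  and tr_inner_self_nonneg: "X \<in> A \<Longrightarrow> Re (tr_inner X X) \<ge> 0"
  unfolding tr_inner_def using tau_adj_comp_self_nonneg by (simp_all add: nonneg_complex_def)

lemma tr_inner_id_left: "X \<in> A \<Longrightarrow> tr_inner op_id X = \<tau> X"
  unfolding tr_inner_def by (simp add: adj_op_id op_id_comp A_bdd_op)

lemma tr_inner_id_right: "X \<in> A \<Longrightarrow> tr_inner X op_id = \<tau> (adj X)"
  unfolding tr_inner_def by (simp add: comp_op_id bdd_op_adj A_bdd_op)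

lemma norm2_power2: "X \<in> A \<Longrightarrow> (norm2 \<tau> X)^2 = Re (tr_inner X X)"
  by (simp add: norm2_eq tr_inner_self_nonneg)

lemma norm2_nonneg: "X \<in> A \<Longrightarrow> norm2 \<tau> X \<ge> 0"
  by (simp add: norm2_eq tr_inner_self_nonneg)

lemma tau_adj:
  assumes X: "X \<in> A"
  shows "\<tau> (adj X) = cnj (\<tau> X)"
proof -
  \<comment> \<open>polarization: \<open>\<langle>X + 1, X + 1\<rangle>\<close> and \<open>\<langle>X + i, X + i\<rangle>\<close> are real\<close>
  have one: "tr_inner op_id op_id = 1" by (simp add: tr_inner_id_left A_id tau_id)
  have e1: "tr_inner (op_add X op_id) (op_add X op_id) = tr_inner X X + tr_inner X op_id + \<tau> X + 1"
    by (simp add: tr_inner_add_left tr_inner_add_right A_add A_id X tr_inner_id_left one)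
  have e2: "tr_inner (op_add X (op_scale \<i> op_id)) (op_add X (op_scale \<i> op_id))
      = tr_inner X X + \<i> * tr_inner X op_id - \<i> * \<tau> X + 1"
    by (simp add: tr_inner_add_left tr_inner_add_right A_add A_id X tr_inner_id_left one
        A_scale tr_inner_scale_left tr_inner_scale_right algebra_simps)
  have "Im (tr_inner (op_add X op_id) (op_add X op_id)) = 0"
    and "Im (tr_inner (op_add X (op_scale \<i> op_id)) (op_add X (op_scale \<i> op_id))) = 0"
    and "Im (tr_inner X X) = 0"
    using tr_inner_self_real A_add A_id A_scale X by blast+
  then show ?thesis using e1 e2 by (simp add: complex_eq_iff tr_inner_id_right[OF X])
qed

lemma tr_inner_comp_le:
  assumes c: "c \<in> A" and e: "\<eta> \<in> A"
  shows "Re (tr_inner (c \<circ> \<eta>) (c \<circ> \<eta>)) \<le> (op_norm c)^2 * Re (tr_inner \<eta> \<eta>)"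
proof -
  define P where "P = adj \<eta> \<circ> \<eta>"
  define Q where "Q = adj (c \<circ> \<eta>) \<circ> (c \<circ> \<eta>)"
  define h where "h = op_sub (op_scale ((op_norm c)^2) P) Q"
  have bc: "is_bdd_op c" and be: "is_bdd_op \<eta>" using c e A_bdd_op by auto
  have PA: "P \<in> A" and QA: "Q \<in> A" unfolding P_def Q_def using A_comp A_adj c e by blast+
  have hA: "h \<in> A" unfolding h_def using A_sub A_scale PA QA by blast
  have "adj P = P" "adj Q = Q"
    using self_adjoint_adj_comp_self[OF be] self_adjoint_adj_comp_self[OF bdd_op_comp[OF bc be]]
    unfolding P_def Q_def self_adjoint_def by blast+
  then have "self_adjoint h"
    using PA QA A_bdd_op
    by (simp add: self_adjoint_def h_def adj_sub adj_scale bdd_op_scale bdd_op_sub)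
  moreover have "op_pos h"
    unfolding h_def P_def Q_def by (rule op_pos_op_norm_bound[OF bc be])
  ultimately have "Re (\<tau> h) \<ge> 0" by (rule tau_nonneg_of_pos[OF hA])
  moreover have "\<tau> h = (op_norm c)^2 * \<tau> P - \<tau> Q"
    unfolding h_def using PA QA by (simp add: tau_sub tau_scale A_scale)
  ultimately show ?thesis by (simp add: tr_inner_def P_def Q_def)
qed

lemma norm2_le_op_norm:
  assumes "D \<in> A"
  shows "norm2 \<tau> D \<le> op_norm D"
proof -
  have "Re (tr_inner D D) \<le> (op_norm D)^2"
    using tr_inner_comp_le[OF assms A_id] comp_op_id[OF A_bdd_op[OF assms]]
      tr_inner_id_left[OF A_id] tau_id by simp
  then have "sqrt (Re (tr_inner D D)) \<le> sqrt ((op_norm D)^2)" by (rule real_sqrt_le_mono)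
  then show ?thesis
    unfolding norm2_eq using op_norm_nonneg[OF A_bdd_op[OF assms]] by simp
qed

lemma tr_inner_Cauchy_Schwarz:
  assumes X: "X \<in> A" and Y: "Y \<in> A"
  shows "(Re (tr_inner X Y + tr_inner Y X))^2 \<le> 4 * Re (tr_inner X X) * Re (tr_inner Y Y)"
proof (rule nonneg_quadratic_discriminant)
  fix t :: real
  have "Re (tr_inner (op_add X (op_scale (of_real t) Y)) (op_add X (op_scale (of_real t) Y))) \<ge> 0"
    using tr_inner_self_nonneg A_add A_scale X Y by blast
  moreover have "tr_inner (op_add X (op_scale (of_real t) Y)) (op_add X (op_scale (of_real t) Y))
    = tr_inner X X + of_real t * (tr_inner X Y + tr_inner Y X) + of_real (t^2) * tr_inner Y Y"
    by (simp add: tr_inner_add_left tr_inner_add_right tr_inner_scale_left tr_inner_scale_right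
        A_add A_scale X Y algebra_simps power2_eq_square)
  ultimately show "0 \<le> Re (tr_inner X X) + t * Re (tr_inner X Y + tr_inner Y X) + t^2 * Re (tr_inner Y Y)"
    by simp
qed (rule tr_inner_self_nonneg[OF Y])

lemma norm2_add_le:
  assumes X: "X \<in> A" and Y: "Y \<in> A"
  shows "norm2 \<tau> (op_add X Y) \<le> norm2 \<tau> X + norm2 \<tau> Y"
proof -
  define q where "q = Re (tr_inner X Y + tr_inner Y X)"
  have "q \<le> sqrt (q^2)" by simp
  also have "\<dots> \<le> sqrt (4 * (norm2 \<tau> X)^2 * (norm2 \<tau> Y)^2)"
    unfolding q_def norm2_power2[OF X] norm2_power2[OF Y]
    by (rule real_sqrt_le_mono[OF tr_inner_Cauchy_Schwarz[OF X Y]])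
  also have "\<dots> = 2 * norm2 \<tau> X * norm2 \<tau> Y"
    by (simp add: real_sqrt_mult norm2_nonneg X Y)
  finally have q: "q \<le> 2 * norm2 \<tau> X * norm2 \<tau> Y" .
  have "(norm2 \<tau> (op_add X Y))^2 = (norm2 \<tau> X)^2 + (norm2 \<tau> Y)^2 + q"
    unfolding norm2_power2[OF A_add[OF X Y]] norm2_power2[OF X] norm2_power2[OF Y] q_def
    by (simp add: tr_inner_add_left tr_inner_add_right A_add X Y)
  also have "\<dots> \<le> (norm2 \<tau> X + norm2 \<tau> Y)^2"
    using q by (simp add: power2_sum)
  finally show ?thesis
    using norm2_nonneg X Y by (meson add_nonneg_nonneg power2_le_imp_le)
qed

lemma norm2_diff_le_op_norm:
  assumes X: "X \<in> A" and Y: "Y \<in> A"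
  shows "\<bar>norm2 \<tau> X - norm2 \<tau> Y\<bar> \<le> op_norm (op_sub X Y)"
proof -
  have "norm2 \<tau> X \<le> norm2 \<tau> Y + op_norm (op_sub X Y)" if X: "X \<in> A" and Y: "Y \<in> A" for X Y
  proof -
    have "op_add Y (op_sub X Y) = X" by (simp add: op_add_def op_sub_def)
    then have "norm2 \<tau> X \<le> norm2 \<tau> Y + norm2 \<tau> (op_sub X Y)"
      using norm2_add_le[OF Y A_sub[OF X Y]] by simp
    then show ?thesis using norm2_le_op_norm[OF A_sub[OF X Y]] by simp
  qed
  from this[OF X Y] this[OF Y X] show ?thesis by (simp add: op_norm_sub_commute abs_le_iff)
qed

lemma continuous_on_norm2:
  assumes "\<forall>x. u x \<in> A" and "op_norm_continuous u"
  shows "continuous_on UNIV (\<lambda>x. norm2 \<tau> (u x))"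
proof -
  have "((\<lambda>x. norm2 \<tau> (u x)) \<longlongrightarrow> norm2 \<tau> (u x0)) (nhds x0)" for x0
  proof (rule tendstoI)
    fix e :: real assume "e > 0"
    then have "\<forall>\<^sub>F x in nhds x0. op_norm (op_sub (u x) (u x0)) < e"
      using assms(2) by (simp add: op_norm_continuous_def)
    then show "\<forall>\<^sub>F x in nhds x0. dist (norm2 \<tau> (u x)) (norm2 \<tau> (u x0)) < e"
    proof (rule eventually_mono)
      fix x assume "op_norm (op_sub (u x) (u x0)) < e"
      then show "dist (norm2 \<tau> (u x)) (norm2 \<tau> (u x0)) < e"
        using norm2_diff_le_op_norm[of "u x" "u x0"] assms(1) by (simp add: dist_real_def)
    qed
  qed
  then show ?thesis
    unfolding continuous_on_def using tendsto_at_iff_tendsto_nhds[of "\<lambda>x. norm2 \<tau> (u x)"] by simp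
qed

end

section \<open>Powers and geometric sums\<close>

fun op_power :: "'i op \<Rightarrow> nat \<Rightarrow> 'i op" where
  "op_power x 0 = op_id"
| "op_power x (Suc n) = x \<circ> op_power x n"

fun geom_sum :: "'i op \<Rightarrow> nat \<Rightarrow> 'i op" where
  "geom_sum x 0 = op_zero"
| "geom_sum x (Suc N) = op_add (geom_sum x N) (op_power x N)"

lemma bdd_op_power: "is_bdd_op x \<Longrightarrow> is_bdd_op (op_power x n)"
  by (induction n) (simp_all add: bdd_op_id bdd_op_comp)

lemma bdd_op_geom_sum: "is_bdd_op x \<Longrightarrow> is_bdd_op (geom_sum x N)"
  by (induction N) (simp_all add: bdd_op_zero bdd_op_add bdd_op_power)

lemma op_power_Suc_right:
  assumes "is_bdd_op x"
  shows "op_power x (Suc n) = op_power x n \<circ> x"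
proof (induction n)
  case 0
  show ?case by (simp add: op_id_comp comp_op_id assms)
next
  case (Suc n)
  have "op_power x (Suc (Suc n)) = x \<circ> (op_power x n \<circ> x)"
    by (simp only: op_power.simps(2) Suc[symmetric])
  then show ?case by (simp add: comp_assoc)
qed

lemma adj_op_power:
  assumes x: "is_bdd_op x"
  shows "adj (op_power x n) = op_power (adj x) n"
proof (induction n)
  case 0
  show ?case by (simp add: adj_op_id)
next
  case (Suc n)
  have "adj (op_power x (Suc n)) = op_power (adj x) n \<circ> adj x"
    using Suc by (simp add: adj_comp x bdd_op_power)
  also have "\<dots> = op_power (adj x) (Suc n)"
    by (rule op_power_Suc_right[OF bdd_op_adj[OF x], symmetric])
  finally show ?case .
qed

lemma one_minus_comp_geom_sum:
  assumes x: "is_bdd_op x"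
  shows "op_sub op_id x \<circ> geom_sum x N = op_sub op_id (op_power x N)"
proof (induction N)
  case 0
  show ?case
    using comp_op_zero[OF bdd_op_sub[OF bdd_op_id x]] by (simp add: op_zero_def op_sub_def fun_eq_iff)
next
  case (Suc N)
  have "op_id (op_power x N v) = op_power x N v" for v
    using bdd_op_in_l2[OF bdd_op_power[OF x]] by (simp add: op_id_def)
  then show ?case
    using comp_op_add[OF bdd_op_sub[OF bdd_op_id x] bdd_op_geom_sum[OF x] bdd_op_power[OF x]] Suc
    by (simp add: op_add_def op_sub_def fun_eq_iff)
qed

context tracial_W_space
begin

lemma A_op_power: "x \<in> A \<Longrightarrow> op_power x n \<in> A"
  by (induction n) (simp_all add: A_id A_comp)

lemma A_geom_sum: "x \<in> A \<Longrightarrow> geom_sum x N \<in> A"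
  by (induction N) (simp_all add: A_zero A_add A_op_power)

definition orthonormal_powers :: "'i op \<Rightarrow> bool" where
  "orthonormal_powers x \<longleftrightarrow> (\<forall>j k. tr_inner (op_power x j) (op_power x k) = (if j = k then 1 else 0))"

lemma tr_inner_geom_sum_left:
  "x \<in> A \<Longrightarrow> Y \<in> A \<Longrightarrow> tr_inner (geom_sum x N) Y = (\<Sum>j<N. tr_inner (op_power x j) Y)"
  by (induction N) (simp_all add: tr_inner_zero_left tr_inner_add_left A_geom_sum A_op_power)

lemma tr_inner_geom_sum_right:
  "x \<in> A \<Longrightarrow> X \<in> A \<Longrightarrow> tr_inner X (geom_sum x N) = (\<Sum>k<N. tr_inner X (op_power x k))"
  by (induction N) (simp_all add: tr_inner_zero_right tr_inner_add_right A_geom_sum A_op_power)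

lemma tr_inner_geom_sum_self:
  assumes x: "x \<in> A" and orth: "orthonormal_powers x"
  shows "tr_inner (geom_sum x N) (geom_sum x N) = of_nat N"
  using orth unfolding orthonormal_powers_def
  by (simp add: tr_inner_geom_sum_left tr_inner_geom_sum_right A_geom_sum A_op_power x)

lemma tr_inner_one_minus_power:
  assumes x: "x \<in> A" and orth: "orthonormal_powers x" and N: "N > 0"
  shows "tr_inner (op_sub op_id (op_power x N)) (op_sub op_id (op_power x N)) = 2"
proof -
  have o: "tr_inner (op_power x j) (op_power x k) = (if j = k then 1 else 0)" for j k
    using orth unfolding orthonormal_powers_def by blast
  show ?thesis
    using o[of 0 0] o[of 0 N] o[of N 0] o[of N N] N
    by (simp add: tr_inner_diff_left tr_inner_diff_right A_sub A_id A_op_power x)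
qed

text \<open>If \<open>c\<close> inverted \<open>1 - x\<close>, then \<open>N = \<parallel>c (1 - x) S\<^sub>N\<parallel>\<^sub>2\<^sup>2 \<le> \<parallel>c\<parallel>\<^sup>2 \<parallel>1 - x\<^sup>N\<parallel>\<^sub>2\<^sup>2 = 2 \<parallel>c\<parallel>\<^sup>2\<close>
  for the geometric sums \<open>S\<^sub>N\<close> and every \<open>N\<close>.\<close>

lemma not_invertible_one_minus_orthonormal_powers:
  assumes x: "x \<in> A" and orth: "orthonormal_powers x"
  shows "\<not> invertible_in A (op_sub op_id x)"
proof
  assume "invertible_in A (op_sub op_id x)"
  then obtain c where c: "c \<in> A" and inv: "c \<circ> op_sub op_id x = op_id"
    unfolding invertible_in_def by blast
  define N where "N = Suc (nat \<lceil>2 * (op_norm c)^2\<rceil>)"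
  define \<eta> where "\<eta> = op_sub op_id x \<circ> geom_sum x N"
  have \<eta>: "\<eta> \<in> A" unfolding \<eta>_def using A_sub A_id A_comp A_geom_sum x by blast
  have "c \<circ> \<eta> = (c \<circ> op_sub op_id x) \<circ> geom_sum x N" unfolding \<eta>_def by (simp add: comp_assoc)
  also have "\<dots> = geom_sum x N" unfolding inv using A_geom_sum A_bdd_op op_id_comp x by blast
  finally have "Re (tr_inner (geom_sum x N) (geom_sum x N)) \<le> (op_norm c)^2 * Re (tr_inner \<eta> \<eta>)"
    using tr_inner_comp_le[OF c \<eta>] by simp
  moreover have "\<eta> = op_sub op_id (op_power x N)"
    unfolding \<eta>_def by (rule one_minus_comp_geom_sum[OF A_bdd_op[OF x]])
  moreover have "N > 0" by (simp add: N_def)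
  ultimately have "real N \<le> (op_norm c)^2 * 2"
    using tr_inner_geom_sum_self[OF x orth, of N] tr_inner_one_minus_power[OF x orth, of N] by simp
  moreover have "real N > 2 * (op_norm c)^2" unfolding N_def by linarith
  ultimately show False by simp
qed

end

section \<open>Centred *-free pairs\<close>

lemma op_prod_Nil [simp]: "op_prod [] = op_id"
  and op_prod_Cons [simp]: "op_prod (x # xs) = x \<circ> op_prod xs"
  by (simp_all add: op_prod_def)

lemma bdd_op_prod: "(\<forall>x\<in>set xs. is_bdd_op x) \<Longrightarrow> is_bdd_op (op_prod xs)"
  by (induction xs) (simp_all add: bdd_op_id bdd_op_comp)

lemma op_prod_append:
  "(\<forall>x\<in>set ys. is_bdd_op x) \<Longrightarrow> op_prod (xs @ ys) = op_prod xs \<circ> op_prod ys"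
  by (induction xs) (simp_all add: op_id_comp bdd_op_prod comp_assoc)

lemma set_concat_replicate: "set (concat (replicate n [x, y])) \<subseteq> {x, y}"
  by (induction n) auto

lemma length_concat_replicate: "length (concat (replicate n [x, y])) = 2 * n"
  by (induction n) auto

lemma op_prod_concat_replicate: "op_prod (concat (replicate n [x, y])) = op_power (x \<circ> y) n"
  by (induction n) (simp_all add: comp_assoc)

context tracial_W_space
begin

lemma star_alg_subset: "a \<in> A \<Longrightarrow> star_alg a \<subseteq> A"
proof
  fix x assume "a \<in> A" "x \<in> star_alg a"
  then show "x \<in> A"
    by (induction rule: star_alg.induct[OF \<open>x \<in> star_alg a\<close>]) (auto intro: A_id A_adj A_add A_comp A_scale)
qed

definition centred_part :: "'i op \<Rightarrow> 'i op" where
  "centred_part X = op_add X (op_scale (- \<tau> X) op_id)"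

lemma tau_centred_part: "X \<in> A \<Longrightarrow> \<tau> (centred_part X) = 0"
  by (simp add: centred_part_def tau_add tau_scale A_scale A_id tau_id)

lemma centred_part_in_star_alg: "X \<in> star_alg a \<Longrightarrow> centred_part X \<in> star_alg a"
  unfolding centred_part_def by (intro star_alg.intros)

lemma A_centred_part: "X \<in> A \<Longrightarrow> centred_part X \<in> A"
  unfolding centred_part_def by (intro A_add A_scale A_id)

lemma tau_sandwich_centred_part:
  assumes P: "P \<in> A" and Q: "Q \<in> A" and X: "X \<in> A"
  shows "\<tau> (P \<circ> X \<circ> Q) = \<tau> (P \<circ> centred_part X \<circ> Q) + \<tau> X * \<tau> (P \<circ> Q)"
proof -
  have bP: "is_bdd_op P" and bQ: "is_bdd_op Q" and bX: "is_bdd_op X" using P Q X A_bdd_op by auto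
  have "X \<circ> Q = op_add (centred_part X \<circ> Q) (op_scale (\<tau> X) Q)"
    using bdd_op_in_l2[OF bQ] by (simp add: centred_part_def op_add_def op_scale_def op_id_def fun_eq_iff)
  then have "P \<circ> X \<circ> Q = op_add (P \<circ> centred_part X \<circ> Q) (op_scale (\<tau> X) (P \<circ> Q))"
    using A_centred_part[OF X] A_bdd_op
    by (simp add: comp_assoc comp_op_add comp_op_scale bP bQ bdd_op_comp bdd_op_scale)
  then show ?thesis
    using P Q X A_centred_part[OF X] by (simp add: tau_add tau_scale A_comp A_scale)
qed

end

locale centred_free_pair = tracial_W_space A \<tau> for A :: "'i op set" and \<tau> +
  fixes a b :: "'i op"
  assumes a: "a \<in> A" and b: "b \<in> A" and free: "star_free \<tau> a b"
    and tau_a: "\<tau> a = 0" and tau_b: "\<tau> b = 0"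
begin

fun alternating_centred :: "bool \<Rightarrow> 'i op list \<Rightarrow> bool" where
  "alternating_centred k [] = True"
| "alternating_centred k (x # xs) \<longleftrightarrow>
     x \<in> (if k then star_alg a else star_alg b) \<and> \<tau> x = 0 \<and> alternating_centred (\<not> k) xs"

lemma alternating_centred_nth:
  "alternating_centred k xs \<Longrightarrow> j < length xs \<Longrightarrow>
     xs ! j \<in> (if even j \<longleftrightarrow> k then star_alg a else star_alg b) \<and> \<tau> (xs ! j) = 0"
proof (induction xs arbitrary: k j)
  case (Cons x xs)
  show ?case
  proof (cases j)
    case 0
    then show ?thesis using Cons.prems by auto
  next
    case (Suc i)
    then have "xs ! i \<in> (if even i \<longleftrightarrow> \<not> k then star_alg a else star_alg b) \<and> \<tau> (xs ! i) = 0"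
      using Cons.prems by (intro Cons.IH) auto
    then show ?thesis using Suc by auto
  qed
qed simp

lemma tau_prod_alternating_centred:
  assumes "alternating_centred k xs" "xs \<noteq> []"
  shows "\<tau> (op_prod xs) = 0"
  using free assms(2) alternating_centred_nth[OF assms(1)] unfolding star_free_def
  by (elim allE[of _ xs] allE[of _ "map (\<lambda>j. even j \<longleftrightarrow> k) [0..<length xs]"]) auto

lemma alternating_centred_append:
  "alternating_centred k (xs @ ys) \<longleftrightarrow>
     alternating_centred k xs \<and> alternating_centred (even (length xs) \<longleftrightarrow> k) ys"
  by (induction xs arbitrary: k) auto

lemma tau_adj_a: "\<tau> (adj a) = 0" and tau_adj_b: "\<tau> (adj b) = 0"
  using tau_adj a b tau_a tau_b by simp_all

lemma alternating_centred_ab: "alternating_centred True (concat (replicate n [a, b]))"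
  by (induction n) (auto simp: tau_a tau_b star_alg.intros)

lemma alternating_centred_adj_ba: "alternating_centred False (concat (replicate n [adj b, adj a]))"
  by (induction n) (auto simp: tau_adj_a tau_adj_b star_alg.intros)

lemma tau_comp_op_prod_alternating:
  assumes "alternating_centred False (ys @ zs)" "ys @ zs \<noteq> []"
    and "set zs \<subseteq> A"
  shows "\<tau> (op_prod ys \<circ> op_prod zs) = 0"
  using tau_prod_alternating_centred[OF assms(1,2)] op_prod_append[of zs ys] assms(3) A_bdd_op
  by (simp add: subset_iff)

lemma tau_word_centred_a:
  assumes X: "X \<in> star_alg a" "\<tau> X = 0"
  shows "\<tau> (op_power (adj b \<circ> adj a) m \<circ> adj b \<circ> X \<circ> b \<circ> op_power (a \<circ> b) n) = 0"
proof -
  let ?ys = "concat (replicate m [adj b, adj a])" and ?zs = "[adj b, X, b] @ concat (replicate n [a, b])"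
  have "alternating_centred False (?ys @ ?zs)"
    using alternating_centred_adj_ba alternating_centred_ab X
    by (simp add: alternating_centred_append length_concat_replicate tau_adj_b tau_b star_alg.intros)
  moreover have "set ?zs \<subseteq> A"
    using set_concat_replicate[of n a b] star_alg_subset[OF a] X(1) a b A_adj by auto
  ultimately have "\<tau> (op_prod ?ys \<circ> op_prod ?zs) = 0"
    by (intro tau_comp_op_prod_alternating) auto
  then show ?thesis
    by (simp add: op_prod_concat_replicate comp_assoc)
qed

lemma tau_word_centred_b:
  assumes Y: "Y \<in> star_alg b" "\<tau> Y = 0"
  shows "\<tau> (op_power (adj b \<circ> adj a) m \<circ> Y \<circ> op_power (a \<circ> b) n) = 0"
proof -
  let ?ys = "concat (replicate m [adj b, adj a])" and ?zs = "Y # concat (replicate n [a, b])"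
  have "alternating_centred False (?ys @ ?zs)"
    using alternating_centred_adj_ba alternating_centred_ab Y
    by (simp add: alternating_centred_append length_concat_replicate)
  moreover have "set ?zs \<subseteq> A"
    using set_concat_replicate[of n a b] star_alg_subset[OF b] Y(1) a b by auto
  ultimately have "\<tau> (op_prod ?ys \<circ> op_prod ?zs) = 0"
    by (intro tau_comp_op_prod_alternating) auto
  then show ?thesis
    by (simp add: op_prod_concat_replicate comp_assoc)
qed

lemma tau_power_ab: "n > 0 \<Longrightarrow> \<tau> (op_power (a \<circ> b) n) = 0"
  using tau_prod_alternating_centred[OF alternating_centred_ab, of n]
  by (simp add: op_prod_concat_replicate length_concat_replicate flip: length_greater_0_conv)

lemma tau_power_adj_ba: "n > 0 \<Longrightarrow> \<tau> (op_power (adj b \<circ> adj a) n) = 0"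
  using tau_prod_alternating_centred[OF alternating_centred_adj_ba, of n]
  by (simp add: op_prod_concat_replicate length_concat_replicate flip: length_greater_0_conv)

lemma tau_moment_Suc_Suc:
  "\<tau> (op_power (adj b \<circ> adj a) (Suc m) \<circ> op_power (a \<circ> b) (Suc n))
     = tr_inner a a * tr_inner b b * \<tau> (op_power (adj b \<circ> adj a) m \<circ> op_power (a \<circ> b) n)"
proof -
  define V where "V = op_power (adj b \<circ> adj a) m"
  define W where "W = op_power (a \<circ> b) n"
  have V: "V \<in> A" and W: "W \<in> A" unfolding V_def W_def using A_op_power A_comp A_adj a b by auto
  have Vb: "V \<circ> adj b \<in> A" and bW: "b \<circ> W \<in> A" using A_comp A_adj V W b by auto
  have aa: "adj a \<circ> a \<in> A" and bb: "adj b \<circ> b \<in> A" using A_comp A_adj a b by auto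
  have split: "op_power (adj b \<circ> adj a) (Suc m) \<circ> op_power (a \<circ> b) (Suc n)
      = (V \<circ> adj b) \<circ> (adj a \<circ> a) \<circ> (b \<circ> W)"
    using op_power_Suc_right[of "adj b \<circ> adj a" m] A_bdd_op A_comp A_adj a b
    by (simp add: V_def W_def comp_assoc)
  have ca: "centred_part (adj a \<circ> a) \<in> star_alg a" and cb: "centred_part (adj b \<circ> b) \<in> star_alg b"
    by (intro centred_part_in_star_alg star_alg.intros)+
  have "\<tau> (V \<circ> adj b \<circ> centred_part (adj a \<circ> a) \<circ> b \<circ> W) = 0"
    unfolding V_def W_def by (rule tau_word_centred_a[OF ca tau_centred_part[OF aa]])
  moreover have "\<tau> (V \<circ> centred_part (adj b \<circ> b) \<circ> W) = 0"
    unfolding V_def W_def by (rule tau_word_centred_b[OF cb tau_centred_part[OF bb]])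
  ultimately have "\<tau> ((V \<circ> adj b) \<circ> (adj a \<circ> a) \<circ> (b \<circ> W))
      = tr_inner a a * (tr_inner b b * \<tau> (V \<circ> W))"
    using tau_sandwich_centred_part[OF Vb bW aa] tau_sandwich_centred_part[OF V W bb]
    by (simp add: comp_assoc tr_inner_def)
  then show ?thesis using split by (simp add: V_def W_def mult.assoc)
qed

lemma tau_moment:
  "\<tau> (op_power (adj b \<circ> adj a) m \<circ> op_power (a \<circ> b) n)
     = (if m = n then (tr_inner a a * tr_inner b b)^n else 0)"
proof (induction m arbitrary: n)
  case 0
  have "op_power (adj b \<circ> adj a) 0 \<circ> op_power (a \<circ> b) n = op_power (a \<circ> b) n"
    using op_id_comp[OF A_bdd_op[OF A_op_power[OF A_comp[OF a b]]]] by simp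
  then have "\<tau> (op_power (adj b \<circ> adj a) 0 \<circ> op_power (a \<circ> b) n) = \<tau> (op_power (a \<circ> b) n)"
    by (rule arg_cong)
  also have "\<dots> = (if 0 = n then (tr_inner a a * tr_inner b b)^n else 0)"
    using tau_power_ab[of n] tau_id by (cases n) simp_all
  finally show ?case .
next
  case (Suc m)
  show ?case
  proof (cases n)
    case 0
    have "op_power (adj b \<circ> adj a) (Suc m) \<circ> op_power (a \<circ> b) 0 = op_power (adj b \<circ> adj a) (Suc m)"
      by (simp only: op_power.simps(1) comp_op_id[OF A_bdd_op[OF A_op_power[OF A_comp[OF A_adj[OF b] A_adj[OF a]]]]])
    then have "\<tau> (op_power (adj b \<circ> adj a) (Suc m) \<circ> op_power (a \<circ> b) n)
        = \<tau> (op_power (adj b \<circ> adj a) (Suc m))"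
      using 0 by (simp only:)
    also have "\<dots> = 0" by (rule tau_power_adj_ba) simp
    finally show ?thesis using 0 by (simp only: nat.distinct if_False)
  next
    case (Suc k)
    then have "\<tau> (op_power (adj b \<circ> adj a) (Suc m) \<circ> op_power (a \<circ> b) n)
        = tr_inner a a * tr_inner b b * \<tau> (op_power (adj b \<circ> adj a) m \<circ> op_power (a \<circ> b) k)"
      by (simp only: tau_moment_Suc_Suc)
    also have "\<dots> = (if Suc m = n then (tr_inner a a * tr_inner b b)^n else 0)"
      using \<open>n = Suc k\<close> by (simp only: Suc.IH) simp
    finally show ?thesis .
  qed
qed

lemma tr_inner_power_ab:
  "tr_inner (op_power (a \<circ> b) m) (op_power (a \<circ> b) n)
     = (if m = n then (tr_inner a a * tr_inner b b)^n else 0)"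
  using tau_moment[of m n] A_bdd_op a b
  by (simp add: tr_inner_def adj_op_power adj_comp bdd_op_comp)

lemma norm2_mult_ne_one:
  assumes "invertible_in A (op_sub op_id (a \<circ> b))"
  shows "norm2 \<tau> a * norm2 \<tau> b \<noteq> 1"
proof
  assume "norm2 \<tau> a * norm2 \<tau> b = 1"
  then have "Re (tr_inner a a) * Re (tr_inner b b) = 1"
    using norm2_power2[OF a] norm2_power2[OF b] by (metis power_mult_distrib power_one)
  then have "tr_inner a a * tr_inner b b = 1"
    using tr_inner_self_real[OF a] tr_inner_self_real[OF b] by (simp add: complex_eq_iff)
  then have "orthonormal_powers (a \<circ> b)"
    by (simp add: orthonormal_powers_def tr_inner_power_ab)
  then show False
    using not_invertible_one_minus_orthonormal_powers[OF A_comp[OF a b]] assms by blast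
qed

end

lemma sublevel_set_clopen_if_value_avoided:
  fixes g :: "'a::topological_space \<Rightarrow> real"
  assumes g: "continuous_on UNIV g" and avoid: "\<And>x. g x \<noteq> c"
  shows "open {x. g x < c}" "closed {x. g x < c}"
proof -
  show "open {x. g x < c}" by (rule open_Collect_less[OF g continuous_on_const])
  have "{x. g x < c} = {x. g x \<le> c}" using avoid by (auto simp: le_less)
  then show "closed {x. g x < c}" using closed_Collect_le[OF g continuous_on_const] by simp
qed

lemma connected_UNIV_clopen:
  fixes S :: "'a::topological_space set"
  assumes "connected (UNIV :: 'a set)" "open S" "closed S"
  shows "S = UNIV \<or> S = {}"
  using connectedD[OF assms(1,2), of "- S"] assms(3) by (auto simp: closed_def)

theorem corollary3p2:
  fixes A :: "'i op set" and \<tau> :: "'i op \<Rightarrow> complex"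
    and u1 u2 :: "'x::topological_space \<Rightarrow> 'i op"
  assumes "tracial_W_prob_space A \<tau>"
    and "\<forall>x. u1 x \<in> A" and "\<forall>x. u2 x \<in> A"
    and "op_norm_continuous u1" and "op_norm_continuous u2"
    and "\<forall>x. star_free \<tau> (u1 x) (u2 x)"
    and "\<forall>x. \<tau> (u1 x) = 0 \<and> \<tau> (u2 x) = 0"
    and "\<forall>x. invertible_in A (op_sub op_id (u1 x \<circ> u2 x))"
  shows "let Y = {x. norm2 \<tau> (u1 x) * norm2 \<tau> (u2 x) < 1} in
           open Y \<and> closed Y \<and> (connected (UNIV :: 'x set) \<longrightarrow> Y = UNIV \<or> Y = {})"
proof -
  interpret tracial_W_space A \<tau> by unfold_locales (rule assms(1))
  define g where "g x = norm2 \<tau> (u1 x) * norm2 \<tau> (u2 x)" for x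
  have avoid: "g x \<noteq> 1" for x
  proof -
    interpret centred_free_pair A \<tau> "u1 x" "u2 x"
      by unfold_locales (use assms in auto)
    show ?thesis unfolding g_def by (rule norm2_mult_ne_one) (use assms in auto)
  qed
  have "continuous_on UNIV g"
    unfolding g_def by (intro continuous_on_mult continuous_on_norm2 assms)
  then have "open {x. g x < 1}" "closed {x. g x < 1}"
    using sublevel_set_clopen_if_value_avoided avoid by blast+
  then show ?thesis
    unfolding Let_def g_def[symmetric] using connected_UNIV_clopen by blast
qed

end
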